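(* Let $G$ be a group, $U$ a nonlocal vertex algebra on which $G$ acts by automorphisms, and $V=\coprod_{g\in G}V[g]$ a nonlocal vertex $G$-graded algebra. Assume that both $U$ and $V$ are irreducible nonlocal vertex algebras and that $U$ has countable dimension over $\mathbb{C}$. Then $U\sharp_GV$ is an irreducible nonlocal vertex algebra.
   Context: A nonlocal vertex algebra is a complex vector space $V$ with vector $\mathbf{1}$ and linear $Y:V\to\mathrm{Hom}(V,V((x)))$, $Y(v,x)=\sum_nv_nx^{-n-1}$, with $Y(\mathbf{1},x)v=v$, $Y(v,x)\mathbf{1}\in V[[x]]$ with constant term $v$, and weak associativity $(x_0+x_2)^lY(u,x_0+x_2)Y(v,x_2)w=(x_0+x_2)^lY(Y(u,x_0)v,x_2)w$ for some $l\ge0$. It is irreducible if $V$, as a module over itself via $Y$, has no submodules other than $0$ and $V$. A nonlocal vertex $G$-graded algebra ($e$ the identity of $G$) is a nonlocal vertex algebra $V=\coprod_gV[g]$ with $\mathbf{1}\in V[e]$ and $Y(u,x)v\in V[gh]((x))$ for $u\in V[g]$, $v\in V[h]$. The smash product $U\sharp_GV$ is $U\otimes V$ with vacuum $\mathbf{1}\otimes\mathbf{1}$ and $Y_\sharp(u\otimes v,x)(u'\otimes v')=Y(u,x)g(u')\otimes Y(v,x)v'$ for $u,u'\in U$, $v\in V[g]$, $v'\in V$; it is a nonlocal vertex algebra. *)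

theory Defs
  imports "HOL-Analysis.Analysis" "HOL-Algebra.Group" "HOL-Library.Groups_Big_Fun"
begin

(* A complex vector space is a type 'v::ab_group_add together with a scalar
   multiplication sc :: complex => 'v => 'v satisfying vector_space sc.
   A vertex operator Y(u,x)v = sum_n u_n v x^(-n-1) is encoded by its modes:
   Y u v n = u_n v. *)

definition bilin :: "(complex \<Rightarrow> 'a::ab_group_add \<Rightarrow> 'a) \<Rightarrow> (complex \<Rightarrow> 'b::ab_group_add \<Rightarrow> 'b)
   \<Rightarrow> (complex \<Rightarrow> 'c::ab_group_add \<Rightarrow> 'c) \<Rightarrow> ('a \<Rightarrow> 'b \<Rightarrow> 'c) \<Rightarrow> bool" where
  "bilin sa sb sc f \<longleftrightarrow> (\<forall>b. Vector_Spaces.linear sa sc (\<lambda>a. f a b)) \<and> (\<forall>a. Vector_Spaces.linear sb sc (f a))"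

(* Y(u,x)v \<in> V((x)) : truncation from above of the modes *)
definition truncated :: "('v::zero \<Rightarrow> 'v \<Rightarrow> int \<Rightarrow> 'v) \<Rightarrow> bool" where
  "truncated Y \<longleftrightarrow> (\<forall>u v. \<exists>N. \<forall>n\<ge>N. Y u v n = 0)"

(* coefficient of x0^c x2^d in Y(u,x0+x2)Y(v,x2)w, where (x0+x2)^k is expanded
   in nonnegative powers of x2: Y(u,x0+x2) = sum_m u_m sum_j binom(-m-1,j) x0^(-m-1-j) x2^j *)
definition prod_coeff :: "(complex \<Rightarrow> 'v \<Rightarrow> 'v) \<Rightarrow> ('v::ab_group_add \<Rightarrow> 'v \<Rightarrow> int \<Rightarrow> 'v)
    \<Rightarrow> 'v \<Rightarrow> 'v \<Rightarrow> 'v \<Rightarrow> int \<Rightarrow> int \<Rightarrow> 'v" where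
  "prod_coeff sc Y u v w c d =
     Sum_any (\<lambda>j::nat. sc ((of_int (c + int j) :: complex) gchoose j)
                           (Y u (Y v w (int j - d - 1)) (- c - 1 - int j)))"

(* coefficient of x0^c x2^d in Y(Y(u,x0)v,x2)w *)
definition iter_coeff :: "('v \<Rightarrow> 'v \<Rightarrow> int \<Rightarrow> 'v) \<Rightarrow> 'v \<Rightarrow> 'v \<Rightarrow> 'v \<Rightarrow> int \<Rightarrow> int \<Rightarrow> 'v" where
  "iter_coeff Y u v w c d = Y (Y u v (- c - 1)) w (- d - 1)"

(* coefficient of x0^a x2^b in (x0+x2)^l F, where F has coefficients F c d *)
definition mult_binom :: "(complex \<Rightarrow> 'v \<Rightarrow> 'v) \<Rightarrow> nat \<Rightarrow> (int \<Rightarrow> int \<Rightarrow> 'v::ab_group_add) \<Rightarrow> int \<Rightarrow> int \<Rightarrow> 'v" where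
  "mult_binom sc l F a b = (\<Sum>t\<le>l. sc (of_nat (l choose t)) (F (a - int (l - t)) (b - int t)))"

definition weak_assoc :: "(complex \<Rightarrow> 'v \<Rightarrow> 'v) \<Rightarrow> ('v::ab_group_add \<Rightarrow> 'v \<Rightarrow> int \<Rightarrow> 'v) \<Rightarrow> bool" where
  "weak_assoc sc Y \<longleftrightarrow> (\<forall>u v w. \<exists>l::nat. \<forall>a b.
      mult_binom sc l (prod_coeff sc Y u v w) a b = mult_binom sc l (iter_coeff Y u v w) a b)"

definition nva :: "(complex \<Rightarrow> 'v \<Rightarrow> 'v) \<Rightarrow> ('v::ab_group_add \<Rightarrow> 'v \<Rightarrow> int \<Rightarrow> 'v) \<Rightarrow> 'v \<Rightarrow> bool" where
  "nva sc Y vac \<longleftrightarrow>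
     vector_space sc \<and>
     (\<forall>n. bilin sc sc sc (\<lambda>u v. Y u v n)) \<and>
     truncated Y \<and>
     (\<forall>v n. Y vac v n = (if n = -1 then v else 0)) \<and>
     (\<forall>v n. n \<ge> 0 \<longrightarrow> Y v vac n = 0) \<and>
     (\<forall>v. Y v vac (-1) = v) \<and>
     weak_assoc sc Y"

definition nva_irreducible :: "(complex \<Rightarrow> 'v \<Rightarrow> 'v) \<Rightarrow> ('v::ab_group_add \<Rightarrow> 'v \<Rightarrow> int \<Rightarrow> 'v) \<Rightarrow> 'v \<Rightarrow> bool" where
  "nva_irreducible sc Y vac \<longleftrightarrow> nva sc Y vac \<and>
     (\<forall>S. module.subspace sc S \<and> (\<forall>u w n. w \<in> S \<longrightarrow> Y u w n \<in> S) \<longrightarrow> S = {0} \<or> S = UNIV)"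

definition nva_aut :: "(complex \<Rightarrow> 'v \<Rightarrow> 'v) \<Rightarrow> ('v::ab_group_add \<Rightarrow> 'v \<Rightarrow> int \<Rightarrow> 'v) \<Rightarrow> 'v \<Rightarrow> ('v \<Rightarrow> 'v) \<Rightarrow> bool" where
  "nva_aut sc Y vac \<sigma> \<longleftrightarrow> bij \<sigma> \<and> Vector_Spaces.linear sc sc \<sigma> \<and> \<sigma> vac = vac \<and>
     (\<forall>u v n. \<sigma> (Y u v n) = Y (\<sigma> u) (\<sigma> v) n)"

definition nva_group_action :: "('g, 'b) monoid_scheme \<Rightarrow> (complex \<Rightarrow> 'u \<Rightarrow> 'u) \<Rightarrow> ('u::ab_group_add \<Rightarrow> 'u \<Rightarrow> int \<Rightarrow> 'u)
     \<Rightarrow> 'u \<Rightarrow> ('g \<Rightarrow> 'u \<Rightarrow> 'u) \<Rightarrow> bool" where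
  "nva_group_action G sc Y vac act \<longleftrightarrow>
     (\<forall>g\<in>carrier G. nva_aut sc Y vac (act g)) \<and>
     act \<one>\<^bsub>G\<^esub> = id \<and>
     (\<forall>g\<in>carrier G. \<forall>h\<in>carrier G. act (g \<otimes>\<^bsub>G\<^esub> h) = act g \<circ> act h)"

definition graded_direct_sum :: "('g, 'b) monoid_scheme \<Rightarrow> (complex \<Rightarrow> 'v \<Rightarrow> 'v) \<Rightarrow> ('g \<Rightarrow> 'v::ab_group_add set) \<Rightarrow> bool" where
  "graded_direct_sum G sc Vg \<longleftrightarrow>
     (\<forall>g\<in>carrier G. module.subspace sc (Vg g)) \<and>
     (\<forall>v. \<exists>!c::'g \<Rightarrow> 'v. (\<forall>g. c g \<in> (if g \<in> carrier G then Vg g else {0})) \<and>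
                     finite {g. c g \<noteq> 0} \<and> v = sum c {g. c g \<noteq> 0})"

definition nva_G_graded :: "('g, 'b) monoid_scheme \<Rightarrow> (complex \<Rightarrow> 'v \<Rightarrow> 'v) \<Rightarrow> ('v::ab_group_add \<Rightarrow> 'v \<Rightarrow> int \<Rightarrow> 'v)
     \<Rightarrow> 'v \<Rightarrow> ('g \<Rightarrow> 'v set) \<Rightarrow> bool" where
  "nva_G_graded G sc Y vac Vg \<longleftrightarrow> nva sc Y vac \<and> graded_direct_sum G sc Vg \<and>
     vac \<in> Vg \<one>\<^bsub>G\<^esub> \<and>
     (\<forall>g\<in>carrier G. \<forall>h\<in>carrier G. \<forall>u\<in>Vg g. \<forall>v\<in>Vg h. \<forall>n. Y u v n \<in> Vg (g \<otimes>\<^bsub>G\<^esub> h))"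

definition countable_dim :: "(complex \<Rightarrow> 'v::ab_group_add \<Rightarrow> 'v) \<Rightarrow> bool" where
  "countable_dim sc \<longleftrightarrow> (\<exists>B. countable B \<and> \<not> module.dependent sc B \<and> module.span sc B = UNIV)"

(* (W, t) is a tensor product of U and V: t bilinear, its image spans W, and
   every bilinear form on U x V factors through t (equivalent to the universal
   property; uniqueness of the factorization follows from spanning). *)
definition is_tensor_product :: "(complex \<Rightarrow> 'u::ab_group_add \<Rightarrow> 'u) \<Rightarrow> (complex \<Rightarrow> 'v::ab_group_add \<Rightarrow> 'v)
     \<Rightarrow> (complex \<Rightarrow> 'w::ab_group_add \<Rightarrow> 'w) \<Rightarrow> ('u \<Rightarrow> 'v \<Rightarrow> 'w) \<Rightarrow> bool" where
  "is_tensor_product su sv sw t \<longleftrightarrow> vector_space sw \<and> bilin su sv sw t \<and>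
     module.span sw {t u v | u v. True} = UNIV \<and>
     (\<forall>\<beta>::'u \<Rightarrow> 'v \<Rightarrow> complex. bilin su sv (*) \<beta> \<longrightarrow>
        (\<exists>\<phi>. Vector_Spaces.linear sw (*) \<phi> \<and> (\<forall>u v. \<beta> u v = \<phi> (t u v))))"

(* YW is the smash-product vertex operator on W = U (x) V:
   Y#(u(x)v,x)(u'(x)v') = Y(u,x)g(u') (x) Y(v,x)v'  for v in V[g];
   coefficientwise: (u(x)v)_n (u'(x)v') = sum_i (u_i g(u')) (x) (v_(n-1-i) v'). *)
definition is_smash_Y :: "('g, 'b) monoid_scheme \<Rightarrow> ('g \<Rightarrow> 'u \<Rightarrow> 'u) \<Rightarrow> ('u \<Rightarrow> 'u \<Rightarrow> int \<Rightarrow> 'u)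
     \<Rightarrow> ('v \<Rightarrow> 'v \<Rightarrow> int \<Rightarrow> 'v) \<Rightarrow> ('g \<Rightarrow> 'v set) \<Rightarrow> (complex \<Rightarrow> 'w::ab_group_add \<Rightarrow> 'w)
     \<Rightarrow> ('u \<Rightarrow> 'v \<Rightarrow> 'w) \<Rightarrow> ('w \<Rightarrow> 'w \<Rightarrow> int \<Rightarrow> 'w) \<Rightarrow> bool" where
  "is_smash_Y G act YU YV Vg sw t YW \<longleftrightarrow>
     (\<forall>n. bilin sw sw sw (\<lambda>a b. YW a b n)) \<and>
     (\<forall>g\<in>carrier G. \<forall>v\<in>Vg g. \<forall>u u' v' n.
        YW (t u v) (t u' v') n = Sum_any (\<lambda>i::int. t (YU u (act g u') i) (YV v v' (n - 1 - i))))"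

end

theory Submission
  imports Defs "HOL-Computational_Algebra.Fundamental_Theorem_Algebra"
begin

text \<open>
  The smash product \<open>U \<sharp>\<^sub>G V\<close> is spanned by the tensors \<open>u \<otimes> v\<close> with \<open>v\<close> homogeneous. For three
  such tensors, every coefficient of \<open>Y(a, x\<^sub>0 + x\<^sub>2) Y(b, x\<^sub>2) c\<close> and of \<open>Y(Y(a, x\<^sub>0) b, x\<^sub>2) c\<close> is a
  convolution of the corresponding coefficients for a twisted triple in \<open>U\<close> and for the triple of
  \<open>V\<close>-parts. Multiplication by \<open>x\<^sub>0 + x\<^sub>2\<close> commutes with convolution, so \<open>U \<sharp>\<^sub>G V\<close> is weakly
  associative with the sum of the exponents for \<open>U\<close> and for \<open>V\<close>.

  For irreducibility, fix a basis of \<open>V\<close> and a nonzero element \<open>\<Sum>\<^sub>b d\<^sub>b \<otimes> b\<close> of a submodule \<open>S\<close>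
  involving as few basis vectors as possible. The maps \<open>d\<^sub>b\<^sub>0 \<mapsto> d\<^sub>b\<close> are then well defined on all of
  \<open>U\<close> and commute with its vertex operators, so by Dixmier's lemma (Schur's lemma together with the
  countable dimension of \<open>U\<close> over the uncountable field \<open>\<complex>\<close>) they are scalars. This puts some
  \<open>\<one> \<otimes> y \<noteq> 0\<close> into \<open>S\<close>; as \<open>Y(\<one> \<otimes> v, x)(\<one> \<otimes> w) = \<one> \<otimes> Y(v, x) w\<close> for homogeneous \<open>v\<close>,
  irreducibility of \<open>V\<close> gives \<open>\<one> \<otimes> V \<subseteq> S\<close>, and the operators of \<open>u \<otimes> \<one>\<close> give \<open>S = U \<otimes> V\<close>.
\<close>

lemma linear_map_add: "Vector_Spaces.linear s1 s2 f \<Longrightarrow> f (x + y) = f x + f y"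
  by (simp add: Vector_Spaces.linear_iff)

lemma linear_map_scale: "Vector_Spaces.linear s1 s2 f \<Longrightarrow> f (s1 c x) = s2 c (f x)"
  by (simp add: Vector_Spaces.linear_iff)

lemma linear_map_zero: "Vector_Spaces.linear s1 s2 f \<Longrightarrow> f 0 = 0"
  using module_hom.zero[of s1 s2 f] by (simp add: module_hom_iff_linear)

lemma linear_map_diff: "Vector_Spaces.linear s1 s2 f \<Longrightarrow> f (x - y) = f x - f y"
  using module_hom.diff[of s1 s2 f] by (simp add: module_hom_iff_linear)

lemma linear_map_sum: "Vector_Spaces.linear s1 s2 f \<Longrightarrow> f (sum g A) = (\<Sum>a\<in>A. f (g a))"
  using module_hom.sum[of s1 s2 f] by (simp add: module_hom_iff_linear)

lemma linear_map_Sum_any: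
  assumes L: "Vector_Spaces.linear s1 s2 L" and f: "finite {x. f x \<noteq> 0}"
  shows "L (Sum_any f) = Sum_any (\<lambda>x. L (f x))"
proof -
  have "Sum_any f = sum f {x. f x \<noteq> 0}" by (rule Sum_any.expand_superset[OF f]) simp
  moreover have "Sum_any (\<lambda>x. L (f x)) = sum (\<lambda>x. L (f x)) {x. f x \<noteq> 0}"
    by (rule Sum_any.expand_superset[OF f]) (auto simp: linear_map_zero[OF L])
  ultimately show ?thesis by (simp add: linear_map_sum[OF L])
qed

lemma vector_space_complex_mult: "vector_space ((*) :: complex \<Rightarrow> complex \<Rightarrow> complex)"
  by unfold_locales (auto simp: algebra_simps)

lemma (in vector_space) linear_scale_self: "Vector_Spaces.linear scale scale (scale c)"
  unfolding Vector_Spaces.linear_iff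
  using vector_space_axioms by (simp add: scale_right_distrib scale_left_commute)

lemma (in vector_space) countable_independent_if_countable_spanning:
  assumes B: "countable B" "span B = UNIV" and A: "independent A"
  shows "countable A"
proof -
  have "\<exists>F. finite F \<and> F \<subseteq> B \<and> a \<in> span F" for a
  proof -
    have "a \<in> span B" using B by auto
    then obtain t r where "a = (\<Sum>x\<in>t. r x *s x)" "finite t" "t \<subseteq> B"
      unfolding span_explicit by blast
    then show ?thesis
      by (intro exI[of _ t]) (auto intro!: span_sum span_scale span_base simp: span_explicit)
  qed
  then obtain F where F: "\<And>a. finite (F a) \<and> F a \<subseteq> B \<and> a \<in> span (F a)" by metis
  have "A \<subseteq> (\<Union>T\<in>{T. finite T \<and> T \<subseteq> B}. {a\<in>A. F a = T})" using F by auto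
  moreover have "countable (\<Union>T\<in>{T. finite T \<and> T \<subseteq> B}. {a\<in>A. F a = T})"
  proof (rule countable_UN)
    show "countable {T. finite T \<and> T \<subseteq> B}" by (rule countable_Collect_finite_subset[OF B(1)])
    fix T assume T: "T \<in> {T. finite T \<and> T \<subseteq> B}"
    have "{a\<in>A. F a = T} \<subseteq> span T" using F by auto
    moreover have "independent {a\<in>A. F a = T}" using A by (rule independent_mono) auto
    ultimately have "finite {a\<in>A. F a = T}" using independent_span_bound[of T] T by auto
    then show "countable {a\<in>A. F a = T}" by (rule countable_finite)
  qed
  ultimately show ?thesis by (rule countable_subset)
qed

section \<open>Dixmier's lemma\<close>

definition poly_apply :: "('a::zero \<Rightarrow> 'v \<Rightarrow> 'v) \<Rightarrow> ('v \<Rightarrow> 'v) \<Rightarrow> 'a poly \<Rightarrow> 'v \<Rightarrow> 'v::ab_group_add" where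
  "poly_apply sc f p x = (\<Sum>i\<le>degree p. sc (coeff p i) ((f ^^ i) x))"

context vector_space
begin

lemma linear_funpow: "Vector_Spaces.linear scale scale f \<Longrightarrow> Vector_Spaces.linear scale scale (f ^^ i)"
proof (induction i)
  case 0
  then show ?case using vector_space_axioms by (simp add: Vector_Spaces.linear_iff id_def)
next
  case (Suc i)
  then show ?case using Vector_Spaces.linear_compose[OF Suc.IH[OF Suc.prems] Suc.prems]
    by (simp add: comp_def)
qed

lemma poly_apply_bound:
  "degree p \<le> N \<Longrightarrow> poly_apply scale f p x = (\<Sum>i\<le>N. scale (coeff p i) ((f ^^ i) x))"
  unfolding poly_apply_def by (rule sum.mono_neutral_left) (auto simp: coeff_eq_0)

lemma poly_apply_add: "poly_apply scale f (p + q) x = poly_apply scale f p x + poly_apply scale f q x"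
proof -
  let ?N = "max (degree p) (degree q)"
  have "degree (p + q) \<le> ?N" by (rule degree_add_le) auto
  then show ?thesis by (simp add: poly_apply_bound[of _ ?N] scale_left_distrib sum.distrib)
qed

lemma poly_apply_smult: "poly_apply scale f (smult a p) x = scale a (poly_apply scale f p x)"
  by (simp add: poly_apply_bound[of _ "degree p"] poly_apply_def scale_sum_right)

lemma poly_apply_diff: "poly_apply scale f (p - q) x = poly_apply scale f p x - poly_apply scale f q x"
  using poly_apply_add[of f "p - q" q x] by (simp add: algebra_simps)

lemma poly_apply_0 [simp]: "poly_apply scale f 0 x = 0"
  by (simp add: poly_apply_def)

lemma poly_apply_sum:
  "finite A \<Longrightarrow> poly_apply scale f (\<Sum>i\<in>A. P i) x = (\<Sum>i\<in>A. poly_apply scale f (P i) x)"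
  by (induction A rule: finite_induct) (auto simp: poly_apply_add)

lemma poly_apply_const: "poly_apply scale f [:c:] x = scale c x"
  by (simp add: poly_apply_def)

lemma linear_poly_apply:
  assumes lf: "Vector_Spaces.linear scale scale f"
  shows "Vector_Spaces.linear scale scale (poly_apply scale f p)"
proof -
  have l: "Vector_Spaces.linear scale scale (f ^^ i)" for i using linear_funpow[OF lf] .
  show ?thesis
    unfolding Vector_Spaces.linear_iff using vector_space_axioms
    by (auto simp: poly_apply_def linear_map_add[OF l] linear_map_scale[OF l] scale_right_distrib
        sum.distrib scale_sum_right scale_left_commute mult.commute)
qed

lemma poly_apply_pCons_0:
  assumes lf: "Vector_Spaces.linear scale scale f"
  shows "poly_apply scale f (pCons 0 p) x = f (poly_apply scale f p x)"
proof -
  have "degree (pCons 0 p) \<le> Suc (degree p)" by (simp add: degree_pCons_le)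
  then have "poly_apply scale f (pCons 0 p) x =
      (\<Sum>i\<le>Suc (degree p). scale (coeff (pCons 0 p) i) ((f ^^ i) x))"
    by (rule poly_apply_bound)
  also have "\<dots> = (\<Sum>i\<le>degree p. scale (coeff p i) (f ((f ^^ i) x)))"
    by (subst sum.atMost_Suc_shift) simp
  also have "\<dots> = f (poly_apply scale f p x)"
    by (simp add: poly_apply_def linear_map_sum[OF lf] linear_map_scale[OF lf])
  finally show ?thesis .
qed

lemma poly_apply_linear_factor:
  assumes "Vector_Spaces.linear scale scale f"
  shows "poly_apply scale f ([:-r, 1:] * p) x = f (poly_apply scale f p x) - scale r (poly_apply scale f p x)"
  by (simp add: poly_apply_diff poly_apply_smult poly_apply_pCons_0[OF assms])

lemma poly_apply_commute:
  assumes lf: "Vector_Spaces.linear scale scale f"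
  shows "poly_apply scale f p (f x) = f (poly_apply scale f p x)"
  by (simp add: poly_apply_def linear_map_sum[OF lf] linear_map_scale[OF lf] funpow_swap1)

end

lemma Lagrange_basis_independent:
  fixes c :: "'a \<Rightarrow> 'a::field"
  assumes L: "finite L" and q0: "(\<Sum>m\<in>L. smult (c m) (\<Prod>k\<in>L - {m}. [:-k, 1:])) = 0" and l: "l \<in> L"
  shows "c l = 0"
proof -
  have root: "poly (\<Prod>k\<in>L - {m}. [:-k, 1:]) l = 0 \<longleftrightarrow> m \<noteq> l" if "m \<in> L" for m
    using L l that by (auto simp: poly_prod prod_zero_iff)
  then have "(\<Sum>m\<in>L. c m * poly (\<Prod>k\<in>L - {m}. [:-k, 1:]) l) = c l * poly (\<Prod>k\<in>L - {l}. [:-k, 1:]) l"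
    using L l by (simp add: sum.remove sum.neutral)
  moreover have "(\<Sum>m\<in>L. c m * poly (\<Prod>k\<in>L - {m}. [:-k, 1:]) l) = 0"
    using arg_cong[OF q0, of "\<lambda>p. poly p l"] by (simp add: poly_sum)
  ultimately show ?thesis using root[OF l] by auto
qed

locale complex_vector_space = vector_space scale for scale :: "complex \<Rightarrow> 'v::ab_group_add \<Rightarrow> 'v"
begin

lemma poly_apply_eq_0_imp_eq_0:
  assumes lf: "Vector_Spaces.linear scale scale f"
    and inj: "\<And>c. inj (\<lambda>x. f x - scale c x)"
    and "p \<noteq> 0" and "poly_apply scale f p x = 0"
  shows "x = 0"
  using assms(3,4)
proof (induction "degree p" arbitrary: p rule: less_induct)
  case less
  show ?case
  proof (cases "degree p = 0")
    case True
    then obtain c where "p = [:c:]" by (metis degree_eq_zeroE)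
    with less show ?thesis by (simp add: poly_apply_const)
  next
    case False
    then have "\<not> (\<exists>a l. a \<noteq> 0 \<and> l = 0 \<and> p = pCons a l)" by auto
    then obtain r where "poly p r = 0" using fundamental_theorem_of_algebra_alt by blast
    then obtain q where pq: "p = [:-r, 1:] * q" by (metis dvdE poly_eq_0_iff_dvd)
    with less have q0: "q \<noteq> 0" by auto
    have "degree p = 1 + degree q"
      using pq degree_mult_eq[of "[:-r,1:]" q] q0 by (simp del: mult_pCons_left)
    then have deg: "degree q < degree p" by simp
    have "f (poly_apply scale f q x) - scale r (poly_apply scale f q x) = 0"
      using less pq poly_apply_linear_factor[OF lf] by simp
    then have "poly_apply scale f q x = 0"
      using inj[of r] linear_map_zero[OF lf] by (metis (mono_tags, lifting) diff_self injD scale_zero_right)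
    then show ?thesis using less(1)[OF deg q0] by simp
  qed
qed

lemma poly_apply_resolvent:
  assumes lf: "Vector_Spaces.linear scale scale f"
    and res: "\<And>c. f (w c) - scale c (w c) = u0" and "finite L" "l \<in> L"
  shows "poly_apply scale f (\<Prod>k\<in>L - {l}. [:-k, 1:]) u0 = poly_apply scale f (\<Prod>k\<in>L. [:-k, 1:]) (w l)"
proof -
  have pa: "Vector_Spaces.linear scale scale (poly_apply scale f p)" for p
    by (rule linear_poly_apply[OF lf])
  let ?Q = "\<Prod>k\<in>L - {l}. [:-k, 1:]"
  have "(\<Prod>k\<in>L. [:-k, 1:]) = [:-l, 1:] * ?Q"
    using assms(3,4) by (simp add: prod.remove)
  then have "poly_apply scale f (\<Prod>k\<in>L. [:-k, 1:]) (w l) =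
      f (poly_apply scale f ?Q (w l)) - scale l (poly_apply scale f ?Q (w l))"
    by (simp only: poly_apply_linear_factor[OF lf])
  also have "\<dots> = poly_apply scale f ?Q (f (w l) - scale l (w l))"
    by (simp add: poly_apply_commute[OF lf] linear_map_diff[OF pa] linear_map_scale[OF pa])
  finally show ?thesis by (simp add: res)
qed

text \<open>Multiplying a vanishing combination of the resolvents by \<open>\<Prod>\<^sub>k (f - k)\<close> gives a polynomial in
  \<open>f\<close> that kills \<open>u\<^sub>0\<close>.\<close>

lemma resolvents_independent:
  assumes lf: "Vector_Spaces.linear scale scale f"
    and inj: "\<And>c. inj (\<lambda>x. f x - scale c x)"
    and res: "\<And>c. f (w c) - scale c (w c) = u0" and "u0 \<noteq> 0"
  shows "inj w" and "independent (range w)"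
proof -
  have w0: "w c \<noteq> 0" for c using res[of c] \<open>u0 \<noteq> 0\<close> by (auto simp: linear_map_zero[OF lf])
  show injw: "inj w"
  proof (rule injI)
    fix c d assume "w c = w d"
    then have "scale c (w c) = scale d (w c)" using res[of c] res[of d] by (simp add: algebra_simps)
    then show "c = d" using w0[of c] by simp
  qed
  show "independent (range w)"
    unfolding independent_explicit_finite_subsets
  proof (intro allI impI ballI)
    fix T a v assume T: "T \<subseteq> range w" "finite T" and sm: "(\<Sum>v\<in>T. scale (a v) v) = 0" and v: "v \<in> T"
    obtain L where L: "T = w ` L" "finite L" using T by (metis finite_subset_image)
    define c where "c l = a (w l)" for l
    have sm2: "(\<Sum>l\<in>L. scale (c l) (w l)) = 0"
      using sm L injw by (simp add: c_def sum.reindex inj_on_subset)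
    define Q where "Q l = (\<Prod>k\<in>L - {l}. [:-k, 1:])" for l
    define P where "P = (\<Prod>k\<in>L. [:-k, 1:])"
    define q where "q = (\<Sum>l\<in>L. smult (c l) (Q l))"
    have pa: "Vector_Spaces.linear scale scale (poly_apply scale f p)" for p
      by (rule linear_poly_apply[OF lf])
    have "poly_apply scale f q u0 = (\<Sum>l\<in>L. scale (c l) (poly_apply scale f (Q l) u0))"
      unfolding q_def using L(2) by (simp add: poly_apply_sum poly_apply_smult)
    also have "\<dots> = (\<Sum>l\<in>L. scale (c l) (poly_apply scale f P (w l)))"
      using poly_apply_resolvent[OF lf res L(2)] by (simp add: P_def Q_def)
    also have "\<dots> = poly_apply scale f P (\<Sum>l\<in>L. scale (c l) (w l))"
      by (simp add: linear_map_sum[OF pa] linear_map_scale[OF pa])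
    also have "\<dots> = 0" using sm2 linear_map_zero[OF pa] by simp
    finally have q0: "q = 0"
      using poly_apply_eq_0_imp_eq_0[OF lf inj] \<open>u0 \<noteq> 0\<close> by blast
    obtain l where l: "l \<in> L" "v = w l" using L v by auto
    show "a v = 0"
      using Lagrange_basis_independent[OF L(2) q0[unfolded q_def Q_def] l(1)] l c_def by simp
  qed
qed

end

locale irreducible_operators = vector_space scale for scale :: "'a::field \<Rightarrow> 'v::ab_group_add \<Rightarrow> 'v" +
  fixes A :: "'i \<Rightarrow> 'v \<Rightarrow> 'v"
  assumes linear_operator: "Vector_Spaces.linear scale scale (A i)"
    and irreducible: "subspace S \<Longrightarrow> (\<And>i w. w \<in> S \<Longrightarrow> A i w \<in> S) \<Longrightarrow> S = {0} \<or> S = UNIV"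
begin

definition intertwiner :: "('v \<Rightarrow> 'v) \<Rightarrow> bool" where
  "intertwiner f \<longleftrightarrow> Vector_Spaces.linear scale scale f \<and> (\<forall>i w. f (A i w) = A i (f w))"

lemma schur:
  assumes "intertwiner f" shows "(\<forall>x. f x = 0) \<or> bij f"
proof -
  interpret lf: Vector_Spaces.linear scale scale f using assms intertwiner_def by auto
  have c: "f (A i w) = A i (f w)" for i w using assms intertwiner_def by auto
  have "{x. f x = 0} = {0} \<or> {x. f x = 0} = UNIV"
    by (rule irreducible) (use lf.subspace_kernel c linear_map_zero[OF linear_operator] in auto)
  moreover have "range f = {0} \<or> range f = UNIV"
    by (rule irreducible) (use lf.subspace_image[of UNIV] c in \<open>auto, metis rangeI\<close>)
  ultimately show ?thesis using lf.inj_iff_eq_0 by (auto simp: bij_def)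
qed

lemma intertwiner_minus_scalar:
  assumes "intertwiner f" shows "intertwiner (\<lambda>x. f x - scale c x)"
  using assms vector_space_axioms
  by (auto simp: intertwiner_def Vector_Spaces.linear_iff algebra_simps scale_right_diff_distrib
      scale_left_commute linear_map_diff[OF linear_operator] linear_map_scale[OF linear_operator])

end

text \<open>Dixmier's lemma: over the uncountable field \<open>\<complex>\<close>, the countable dimension forces every
  intertwiner \<open>f\<close> to have an eigenvalue, since otherwise every \<open>f - c\<close> is invertible by Schur's lemma
  and the resolvents \<open>(f - c)\<^sup>-\<^sup>1 u\<^sub>0\<close> form an uncountable independent family.\<close>

locale countable_dim_irreducible_operators =
  complex_vector_space scale + irreducible_operators scale A
  for scale :: "complex \<Rightarrow> 'v::ab_group_add \<Rightarrow> 'v" and A :: "'i \<Rightarrow> 'v \<Rightarrow> 'v" +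
  assumes countable_basis: "\<exists>B. countable B \<and> independent B \<and> span B = UNIV"
begin

lemma dixmier:
  assumes f: "intertwiner f" shows "\<exists>c. \<forall>x. f x = scale c x"
proof (rule ccontr)
  assume nc: "\<not> (\<exists>c. \<forall>x. f x = scale c x)"
  have lf: "Vector_Spaces.linear scale scale f" using f intertwiner_def by auto
  have bij: "bij (\<lambda>x. f x - scale c x)" for c
    using schur[OF intertwiner_minus_scalar[OF f, of c]] nc by auto
  obtain u0 where "f u0 \<noteq> 0" using nc by (metis scale_zero_left)
  then have u0: "u0 \<noteq> 0" using linear_map_zero[OF lf] by auto
  define w where "w c = inv_into UNIV (\<lambda>x. f x - scale c x) u0" for c
  have res: "f (w c) - scale c (w c) = u0" for c
    unfolding w_def using bij[of c] by (meson bij_inv_eq_iff)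
  have inj: "inj (\<lambda>x. f x - scale c x)" for c using bij by (rule bij_is_inj)
  obtain B where "countable B" "span B = UNIV" using countable_basis by auto
  then have "countable (range w)"
    using countable_independent_if_countable_spanning resolvents_independent(2)[OF lf inj res u0]
    by blast
  then have "countable (UNIV :: complex set)"
    using resolvents_independent(1)[OF lf inj res u0] countable_image_inj_on by blast
  then show False using uncountable_UNIV_complex by simp
qed

end

section \<open>Coefficient arrays in two variables\<close>

lemma Sum_any_case_prod:
  assumes "finite {(a, b). g a b \<noteq> (0::'c::comm_monoid_add)}"
  shows "Sum_any (\<lambda>a. Sum_any (\<lambda>b. g a b)) = Sum_any (\<lambda>(a, b). g a b)"
proof -
  let ?S = "{(a, b). g a b \<noteq> 0}"
  show ?thesis
  proof (rule Sum_any.cartesian_product[of "fst ` ?S \<times> snd ` ?S"])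
    show "finite (fst ` ?S \<times> snd ` ?S)" using assms by auto
    show "{a. \<exists>b. g a b \<noteq> 0} \<times> {b. \<exists>a. g a b \<noteq> 0} \<subseteq> fst ` ?S \<times> snd ` ?S"
      by (auto simp: image_iff)
  qed
qed

lemma Sum_any_triangle:
  fixes g :: "nat \<Rightarrow> nat \<Rightarrow> 'c::comm_monoid_add"
  assumes fin: "finite {(a, b). g a b \<noteq> 0}"
  shows "Sum_any (\<lambda>(a, b). g a b) = Sum_any (\<lambda>k. \<Sum>i\<le>k. g i (k - i))"
proof -
  obtain N where N: "(\<lambda>(a, b). a + b) ` {(a, b). g a b \<noteq> 0} \<subseteq> {..<N}"
    using finite_nat_bounded[OF finite_imageI[OF fin]] by (rule exE)
  then have S: "a + b < N" if "g a b \<noteq> 0" for a b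
    using that by blast
  have fT: "finite {(i, j). i + j < (N::nat)}"
    by (rule finite_subset[of _ "{..<N} \<times> {..<N}"]) auto
  have "Sum_any (\<lambda>(a, b). g a b) = (\<Sum>(i, j)\<in>{(i, j). i + j < N}. g i j)"
    by (rule Sum_any.expand_superset[OF fT]) (use S in auto)
  also have "\<dots> = (\<Sum>k<N. \<Sum>i\<le>k. g i (k - i))" by (rule sum.triangle_reindex)
  also have "\<dots> = Sum_any (\<lambda>k. \<Sum>i\<le>k. g i (k - i))"
  proof (rule Sum_any.expand_superset[symmetric])
    show "{k. (\<Sum>i\<le>k. g i (k - i)) \<noteq> 0} \<subseteq> {..<N}"
    proof
      fix k assume "k \<in> {k. (\<Sum>i\<le>k. g i (k - i)) \<noteq> 0}"
      then obtain i where "i \<le> k" "g i (k - i) \<noteq> 0"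
        using sum.not_neutral_contains_not_neutral by blast
      then show "k \<in> {..<N}" using S[of i "k - i"] by simp
    qed
  qed simp
  finally show ?thesis .
qed

text \<open>Coefficients of \<open>(x\<^sub>0 + x\<^sub>2) F(x\<^sub>0, x\<^sub>2)\<close>, where \<open>F a b\<close> is the coefficient of \<open>x\<^sub>0\<^sup>a x\<^sub>2\<^sup>b\<close>.\<close>

definition mult_x0_plus_x2 :: "(int \<Rightarrow> int \<Rightarrow> 'a::ab_group_add) \<Rightarrow> int \<Rightarrow> int \<Rightarrow> 'a" where
  "mult_x0_plus_x2 F a b = F (a - 1) b + F a (b - 1)"

lemma mult_binom_eq_funpow:
  assumes "vector_space sc"
  shows "mult_binom sc l F = (mult_x0_plus_x2 ^^ l) F"
proof (induction l)
  case 0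
  have "sc 1 x = x" for x using assms by (simp add: vector_space_def)
  then show ?case by (auto simp: mult_binom_def fun_eq_iff)
next
  case (Suc l)
  interpret vector_space sc by fact
  have "mult_binom sc (Suc l) F a b = mult_x0_plus_x2 (mult_binom sc l F) a b" for a b
  proof -
    let ?X = "(\<Sum>t\<le>l. sc (of_nat (l choose t)) (F (a - int (l - t)) (b - 1 - int t)))"
    let ?Y = "(\<Sum>t<l. sc (of_nat (l choose Suc t)) (F (a - int (l - t)) (b - 1 - int t)))"
    have "mult_binom sc (Suc l) F a b =
      (\<Sum>t\<le>Suc l. sc (of_nat (Suc l choose t)) (F (a - int (Suc l - t)) (b - int t)))"
      by (simp add: mult_binom_def)
    also have "\<dots> = sc 1 (F (a - int (Suc l)) b) +
        (\<Sum>t\<le>l. sc (of_nat (Suc l choose Suc t)) (F (a - int (l - t)) (b - int (Suc t))))"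
      by (subst sum.atMost_Suc_shift) simp
    also have "\<dots> = F (a - int (Suc l)) b + ?X +
        (\<Sum>t\<le>l. sc (of_nat (l choose Suc t)) (F (a - int (l - t)) (b - 1 - int t)))"
      by (simp add: scale_left_distrib sum.distrib algebra_simps)
    also have "(\<Sum>t\<le>l. sc (of_nat (l choose Suc t)) (F (a - int (l - t)) (b - 1 - int t))) = ?Y"
      by (simp add: lessThan_Suc_atMost[symmetric])
    finally have e1: "mult_binom sc (Suc l) F a b = F (a - int (Suc l)) b + ?X + ?Y" .
    have "mult_binom sc l F (a - 1) b =
        sc 1 (F (a - 1 - int l) b) +
        (\<Sum>t<l. sc (of_nat (l choose Suc t)) (F (a - 1 - int (l - Suc t)) (b - int (Suc t))))"
      by (simp add: mult_binom_def sum.atMost_shift)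
    also have "(\<Sum>t<l. sc (of_nat (l choose Suc t)) (F (a - 1 - int (l - Suc t)) (b - int (Suc t)))) = ?Y"
      by (rule sum.cong) (auto simp: of_nat_diff algebra_simps)
    finally have e2: "mult_binom sc l F (a - 1) b = F (a - int (Suc l)) b + ?Y"
      by (simp add: algebra_simps)
    have e3: "mult_binom sc l F a (b - 1) = ?X" by (simp add: mult_binom_def algebra_simps)
    show ?thesis using e1 e2 e3 by (simp add: mult_x0_plus_x2_def algebra_simps)
  qed
  then show ?case using Suc by (auto simp: fun_eq_iff)
qed

lemma funpow_mult_x0_plus_x2_add:
  "(mult_x0_plus_x2 ^^ l) (\<lambda>x y. F x y + G x y) = (\<lambda>x y. (mult_x0_plus_x2 ^^ l) F x y + (mult_x0_plus_x2 ^^ l) G x y)"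
  by (induction l) (auto simp: mult_x0_plus_x2_def fun_eq_iff algebra_simps)

lemma funpow_mult_x0_plus_x2_diff:
  "(mult_x0_plus_x2 ^^ l) (\<lambda>x y. F x y - G x y) = (\<lambda>x y. (mult_x0_plus_x2 ^^ l) F x y - (mult_x0_plus_x2 ^^ l) G x y)"
  by (induction l) (auto simp: mult_x0_plus_x2_def fun_eq_iff algebra_simps)

lemma funpow_mult_x0_plus_x2_zero: "(mult_x0_plus_x2 ^^ l) (\<lambda>x y. 0) = (\<lambda>x y. 0)"
  by (induction l) (auto simp: mult_x0_plus_x2_def fun_eq_iff)

lemma (in vector_space) funpow_mult_x0_plus_x2_scale:
  "(mult_x0_plus_x2 ^^ l) (\<lambda>x y. scale k (F x y)) = (\<lambda>x y. scale k ((mult_x0_plus_x2 ^^ l) F x y))"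
  by (induction l) (auto simp: mult_x0_plus_x2_def fun_eq_iff scale_right_distrib)

lemma (in vector_space) subspace_annihilated_by_power:
  assumes "\<And>x y. Vector_Spaces.linear scale scale (\<lambda>a. D a x y)"
  shows "subspace {a. \<exists>l. (mult_x0_plus_x2 ^^ l) (D a) = (\<lambda>x y. 0)}"
  unfolding subspace_def
proof (intro conjI ballI allI)
  have "D 0 = (\<lambda>x y. 0)" using linear_map_zero[OF assms] by auto
  then show "0 \<in> {a. \<exists>l. (mult_x0_plus_x2 ^^ l) (D a) = (\<lambda>x y. 0)}"
    by (auto intro!: exI[of _ 0])
next
  fix a b assume "a \<in> {a. \<exists>l. (mult_x0_plus_x2 ^^ l) (D a) = (\<lambda>x y. 0)}"
    "b \<in> {a. \<exists>l. (mult_x0_plus_x2 ^^ l) (D a) = (\<lambda>x y. 0)}"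
  then obtain l1 l2 where l1: "(mult_x0_plus_x2 ^^ l1) (D a) = (\<lambda>x y. 0)"
    and l2: "(mult_x0_plus_x2 ^^ l2) (D b) = (\<lambda>x y. 0)" by auto
  have "(mult_x0_plus_x2 ^^ (l2 + l1)) (D a) = (\<lambda>x y. 0)"
    using l1 by (simp add: funpow_add funpow_mult_x0_plus_x2_zero)
  moreover have "(mult_x0_plus_x2 ^^ (l1 + l2)) (D b) = (\<lambda>x y. 0)"
    using l2 by (simp add: funpow_add funpow_mult_x0_plus_x2_zero)
  moreover have "D (a + b) = (\<lambda>x y. D a x y + D b x y)"
    by (simp add: fun_eq_iff linear_map_add[OF assms])
  ultimately have "(mult_x0_plus_x2 ^^ (l1 + l2)) (D (a + b)) = (\<lambda>x y. 0)"
    by (simp add: funpow_mult_x0_plus_x2_add add.commute)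
  then show "a + b \<in> {a. \<exists>l. (mult_x0_plus_x2 ^^ l) (D a) = (\<lambda>x y. 0)}" by blast
next
  fix c a assume "a \<in> {a. \<exists>l. (mult_x0_plus_x2 ^^ l) (D a) = (\<lambda>x y. 0)}"
  then obtain l where "(mult_x0_plus_x2 ^^ l) (D a) = (\<lambda>x y. 0)" by auto
  moreover have "D (scale c a) = (\<lambda>x y. scale c (D a x y))"
    by (simp add: fun_eq_iff linear_map_scale[OF assms])
  ultimately have "(mult_x0_plus_x2 ^^ l) (D (scale c a)) = (\<lambda>x y. 0)"
    by (simp add: funpow_mult_x0_plus_x2_scale)
  then show "scale c a \<in> {a. \<exists>l. (mult_x0_plus_x2 ^^ l) (D a) = (\<lambda>x y. 0)}" by blast
qed

locale bilinear_map =
  fixes su :: "complex \<Rightarrow> 'u::ab_group_add \<Rightarrow> 'u" and sv :: "complex \<Rightarrow> 'v::ab_group_add \<Rightarrow> 'v"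
    and sw :: "complex \<Rightarrow> 'w::ab_group_add \<Rightarrow> 'w" and t :: "'u \<Rightarrow> 'v \<Rightarrow> 'w"
  assumes bilinear: "bilin su sv sw t"
begin

lemma linear_left: "Vector_Spaces.linear su sw (\<lambda>a. t a b)"
  using bilinear bilin_def by blast

lemma linear_right: "Vector_Spaces.linear sv sw (t a)"
  using bilinear bilin_def by blast

lemma zero_left [simp]: "t 0 y = 0" and zero_right [simp]: "t x 0 = 0"
  using linear_map_zero[OF linear_left] linear_map_zero[OF linear_right] by auto

lemma add_left: "t (x1 + x2) y = t x1 y + t x2 y" and add_right: "t x (y1 + y2) = t x y1 + t x y2"
  using linear_map_add[OF linear_left] linear_map_add[OF linear_right] by auto

lemma diff_left: "t (x1 - x2) y = t x1 y - t x2 y"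
  using linear_map_diff[OF linear_left] by auto

lemma scale_left: "t (su c x) y = sw c (t x y)" and scale_right: "t x (sv c y) = sw c (t x y)"
  using linear_map_scale[OF linear_left] linear_map_scale[OF linear_right] by auto

lemma sum_right: "t x (sum g A) = (\<Sum>a\<in>A. t x (g a))"
  using linear_map_sum[OF linear_right] by auto

lemma Sum_any_left: "finite {x. f x \<noteq> 0} \<Longrightarrow> t (Sum_any f) y = Sum_any (\<lambda>x. t (f x) y)"
  using linear_map_Sum_any[OF linear_left] by blast

lemma Sum_any_right: "finite {x. f x \<noteq> 0} \<Longrightarrow> t x (Sum_any f) = Sum_any (\<lambda>y. t x (f y))"
  using linear_map_Sum_any[OF linear_right] by blast

text \<open>Coefficients of the product of two Laurent series in \<open>x\<^sub>0, x\<^sub>2\<close>, multiplied through \<open>t\<close>.\<close>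

definition conv :: "(int \<Rightarrow> int \<Rightarrow> 'u) \<Rightarrow> (int \<Rightarrow> int \<Rightarrow> 'v) \<Rightarrow> int \<Rightarrow> int \<Rightarrow> 'w" where
  "conv F G a b = Sum_any (\<lambda>(c, d). t (F c d) (G (a - c) (b - d)))"

end

definition conv_summable :: "(int \<Rightarrow> int \<Rightarrow> 'u::zero) \<Rightarrow> (int \<Rightarrow> int \<Rightarrow> 'v::zero) \<Rightarrow> bool" where
  "conv_summable F G \<longleftrightarrow> (\<forall>a b. finite {(c, d). F c d \<noteq> 0 \<and> G (a - c) (b - d) \<noteq> 0})"

lemma conv_summable_shift_left:
  assumes "conv_summable F G"
  shows "conv_summable (\<lambda>c d. F (c - i) (d - j)) G"
  unfolding conv_summable_def
proof (intro allI)
  fix a b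
  have "{(c, d). F (c - i) (d - j) \<noteq> 0 \<and> G (a - c) (b - d) \<noteq> 0} \<subseteq>
      (\<lambda>(c, d). (c + i, d + j)) ` {(c, d). F c d \<noteq> 0 \<and> G (a - i - c) (b - j - d) \<noteq> 0}"
  proof clarify
    fix c d assume "F (c - i) (d - j) \<noteq> 0" "G (a - c) (b - d) \<noteq> 0"
    then show "(c, d) \<in> (\<lambda>(c, d). (c + i, d + j)) ` {(c, d). F c d \<noteq> 0 \<and> G (a - i - c) (b - j - d) \<noteq> 0}"
      by (intro image_eqI[of _ _ "(c - i, d - j)"]) (auto simp: algebra_simps)
  qed
  then show "finite {(c, d). F (c - i) (d - j) \<noteq> 0 \<and> G (a - c) (b - d) \<noteq> 0}"
    using assms unfolding conv_summable_def by (meson finite_imageI finite_subset)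
qed

lemma conv_summable_shift_right:
  assumes "conv_summable F G"
  shows "conv_summable F (\<lambda>c d. G (c - i) (d - j))"
  unfolding conv_summable_def
proof (intro allI)
  fix a b
  have "{(c, d). F c d \<noteq> 0 \<and> G (a - c - i) (b - d - j) \<noteq> 0} =
      {(c, d). F c d \<noteq> 0 \<and> G (a - i - c) (b - j - d) \<noteq> 0}"
    by (simp add: algebra_simps)
  then show "finite {(c, d). F c d \<noteq> 0 \<and> G (a - c - i) (b - d - j) \<noteq> 0}"
    using assms unfolding conv_summable_def by simp
qed

lemma conv_summable_add_left:
  fixes F1 F2 :: "int \<Rightarrow> int \<Rightarrow> 'a::monoid_add"
  assumes "conv_summable F1 G" "conv_summable F2 G"
  shows "conv_summable (\<lambda>c d. F1 c d + F2 c d) G"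
  unfolding conv_summable_def
proof (intro allI)
  fix a b
  have "{(c, d). F1 c d + F2 c d \<noteq> 0 \<and> G (a - c) (b - d) \<noteq> 0} \<subseteq>
      {(c, d). F1 c d \<noteq> 0 \<and> G (a - c) (b - d) \<noteq> 0} \<union> {(c, d). F2 c d \<noteq> 0 \<and> G (a - c) (b - d) \<noteq> 0}"
    by auto
  then show "finite {(c, d). F1 c d + F2 c d \<noteq> 0 \<and> G (a - c) (b - d) \<noteq> 0}"
    using assms unfolding conv_summable_def by (meson finite_UnI finite_subset)
qed

lemma conv_summable_add_right:
  fixes G1 G2 :: "int \<Rightarrow> int \<Rightarrow> 'a::monoid_add"
  assumes "conv_summable F G1" "conv_summable F G2"
  shows "conv_summable F (\<lambda>c d. G1 c d + G2 c d)"
  unfolding conv_summable_def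
proof (intro allI)
  fix a b
  have "{(c, d). F c d \<noteq> 0 \<and> G1 (a - c) (b - d) + G2 (a - c) (b - d) \<noteq> 0} \<subseteq>
      {(c, d). F c d \<noteq> 0 \<and> G1 (a - c) (b - d) \<noteq> 0} \<union> {(c, d). F c d \<noteq> 0 \<and> G2 (a - c) (b - d) \<noteq> 0}"
    by auto
  then show "finite {(c, d). F c d \<noteq> 0 \<and> G1 (a - c) (b - d) + G2 (a - c) (b - d) \<noteq> 0}"
    using assms unfolding conv_summable_def by (meson finite_UnI finite_subset)
qed

lemma conv_summable_mult_left: "conv_summable F G \<Longrightarrow> conv_summable (mult_x0_plus_x2 F) G"
  unfolding mult_x0_plus_x2_def[abs_def]
  using conv_summable_add_left conv_summable_shift_left[of F G 1 0] conv_summable_shift_left[of F G 0 1]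
  by simp

lemma conv_summable_mult_right: "conv_summable F G \<Longrightarrow> conv_summable F (mult_x0_plus_x2 G)"
  unfolding mult_x0_plus_x2_def[abs_def]
  using conv_summable_add_right conv_summable_shift_right[of F G 1 0] conv_summable_shift_right[of F G 0 1]
  by simp

lemma conv_summable_funpow_mult:
  "conv_summable F G \<Longrightarrow> conv_summable ((mult_x0_plus_x2 ^^ l1) F) ((mult_x0_plus_x2 ^^ l2) G)"
proof -
  assume "conv_summable F G"
  then have "conv_summable ((mult_x0_plus_x2 ^^ l1) F) G"
    by (induction l1) (auto intro: conv_summable_mult_left)
  then show ?thesis by (induction l2) (auto intro: conv_summable_mult_right)
qed

context bilinear_map
begin

lemma conv_summand_finite:
  assumes "conv_summable F G"
  shows "finite {p. (case p of (c, d) \<Rightarrow> t (F c d) (G (a - c) (b - d))) \<noteq> 0}"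
proof (rule finite_subset)
  show "finite {(c, d). F c d \<noteq> 0 \<and> G (a - c) (b - d) \<noteq> 0}"
    using assms unfolding conv_summable_def by blast
qed auto

lemma conv_add_left:
  assumes "conv_summable F1 G" "conv_summable F2 G"
  shows "conv (\<lambda>c d. F1 c d + F2 c d) G = (\<lambda>a b. conv F1 G a b + conv F2 G a b)"
proof (intro ext)
  fix a b
  show "conv (\<lambda>c d. F1 c d + F2 c d) G a b = conv F1 G a b + conv F2 G a b"
    unfolding conv_def
    using Sum_any.distrib[OF conv_summand_finite[OF assms(1)] conv_summand_finite[OF assms(2)]]
    by (simp add: add_left case_prod_beta)
qed

lemma conv_add_right:
  assumes "conv_summable F G1" "conv_summable F G2"
  shows "conv F (\<lambda>c d. G1 c d + G2 c d) = (\<lambda>a b. conv F G1 a b + conv F G2 a b)"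
proof (intro ext)
  fix a b
  show "conv F (\<lambda>c d. G1 c d + G2 c d) a b = conv F G1 a b + conv F G2 a b"
    unfolding conv_def
    using Sum_any.distrib[OF conv_summand_finite[OF assms(1)] conv_summand_finite[OF assms(2)]]
    by (simp add: add_right case_prod_beta)
qed

lemma conv_shift_left: "conv (\<lambda>c d. F (c - i) (d - j)) G a b = conv F G (a - i) (b - j)"
  unfolding conv_def
proof (rule Sum_any.reindex_cong[of "\<lambda>(c, d). (c + i, d + j)"])
  show "bij (\<lambda>(c, d). (c + i, d + j))"
    by (rule bij_betw_byWitness[where f' = "\<lambda>(c, d). (c - i, d - j)"]) auto
qed (auto simp: fun_eq_iff algebra_simps)

lemma conv_shift_right: "conv F (\<lambda>c d. G (c - i) (d - j)) a b = conv F G (a - i) (b - j)"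
  unfolding conv_def by (simp add: algebra_simps)

lemma conv_mult_left:
  assumes "conv_summable F G" shows "conv (mult_x0_plus_x2 F) G = mult_x0_plus_x2 (conv F G)"
  using conv_add_left[OF conv_summable_shift_left[OF assms, of 1 0] conv_summable_shift_left[OF assms, of 0 1]]
  by (simp add: mult_x0_plus_x2_def[abs_def] conv_shift_left[where j = 0, simplified]
      conv_shift_left[where i = 0, simplified])

lemma conv_mult_right:
  assumes "conv_summable F G" shows "conv F (mult_x0_plus_x2 G) = mult_x0_plus_x2 (conv F G)"
  using conv_add_right[OF conv_summable_shift_right[OF assms, of 1 0] conv_summable_shift_right[OF assms, of 0 1]]
  by (simp add: mult_x0_plus_x2_def[abs_def] conv_shift_right[where j = 0, simplified]
      conv_shift_right[where i = 0, simplified])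

lemma conv_funpow_mult:
  assumes "conv_summable F G"
  shows "(mult_x0_plus_x2 ^^ (l1 + l2)) (conv F G) =
    conv ((mult_x0_plus_x2 ^^ l1) F) ((mult_x0_plus_x2 ^^ l2) G)"
proof (induction l2)
  case 0
  show ?case
  proof (induction l1)
    case (Suc l1)
    then show ?case
      using conv_mult_left[OF conv_summable_funpow_mult[OF assms, of l1 0]] by simp
  qed simp
next
  case (Suc l2)
  then show ?case
    using conv_mult_right[OF conv_summable_funpow_mult[OF assms, of l1 l2]] by simp
qed

end

section \<open>Tensor products\<close>

locale tensor_product = U: vector_space su + V: vector_space sv
  for su :: "complex \<Rightarrow> 'u::ab_group_add \<Rightarrow> 'u" and sv :: "complex \<Rightarrow> 'v::ab_group_add \<Rightarrow> 'v" +
  fixes sw :: "complex \<Rightarrow> 'w::ab_group_add \<Rightarrow> 'w" and t :: "'u \<Rightarrow> 'v \<Rightarrow> 'w"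
  assumes tensor: "is_tensor_product su sv sw t"
begin

sublocale W: vector_space sw
  using tensor by (simp add: is_tensor_product_def)

sublocale bilinear_map su sv sw t
  using tensor by (simp add: is_tensor_product_def bilinear_map_def)

lemma span_tensors: "W.span {t u v | u v. True} = UNIV"
  using tensor by (simp add: is_tensor_product_def)

text \<open>Evaluate the linear form induced by \<open>\<phi> \<otimes> \<psi>\<close>, where \<open>\<phi>(d b\<^sub>0) = 1\<close> and \<open>\<psi>\<close> is the coordinate
  of \<open>b\<^sub>0\<close> with respect to \<open>B\<close>.\<close>

lemma tensor_independent_coeff_eq_0:
  assumes B: "V.independent B" and F: "finite F" "F \<subseteq> B"
    and z: "(\<Sum>b\<in>F. t (d b) b) = 0" and b0: "b0 \<in> F"
  shows "d b0 = 0"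
proof (rule ccontr)
  assume nz: "d b0 \<noteq> 0"
  interpret UC: vector_space_pair su "(*) :: complex \<Rightarrow> complex \<Rightarrow> complex"
    by (intro vector_space_pair.intro U.vector_space_axioms vector_space_complex_mult)
  interpret VC: vector_space_pair sv "(*) :: complex \<Rightarrow> complex \<Rightarrow> complex"
    by (intro vector_space_pair.intro V.vector_space_axioms vector_space_complex_mult)
  obtain \<phi> where \<phi>: "Vector_Spaces.linear su (*) \<phi>" "\<phi> (d b0) = 1"
    using UC.linear_independent_extend[of "{d b0}" "\<lambda>_. 1"] nz by auto
  obtain \<psi> where \<psi>: "Vector_Spaces.linear sv (*) \<psi>" "\<And>b. b \<in> B \<Longrightarrow> \<psi> b = (if b = b0 then 1 else 0)"
    using VC.linear_independent_extend[OF B, of "\<lambda>b. if b = b0 then 1 else 0"] by auto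
  have "Vector_Spaces.linear su (*) (\<lambda>u. \<phi> u * \<psi> v)" for v
    using \<phi>(1) unfolding Vector_Spaces.linear_iff by (simp add: distrib_right)
  moreover have "Vector_Spaces.linear sv (*) (\<lambda>v. \<phi> u * \<psi> v)" for u
    using \<psi>(1) unfolding Vector_Spaces.linear_iff by (simp add: distrib_left mult.left_commute)
  ultimately have "bilin su sv (*) (\<lambda>u v. \<phi> u * \<psi> v)"
    unfolding bilin_def by blast
  then obtain \<Phi> where \<Phi>: "Vector_Spaces.linear sw (*) \<Phi>" "\<And>u v. \<phi> u * \<psi> v = \<Phi> (t u v)"
    using tensor unfolding is_tensor_product_def by blast
  have "\<Phi> (\<Sum>b\<in>F. t (d b) b) = (\<Sum>b\<in>F. \<phi> (d b) * \<psi> b)"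
    by (simp add: linear_map_sum[OF \<Phi>(1)] \<Phi>(2))
  also have "\<dots> = \<phi> (d b0) * \<psi> b0 + (\<Sum>b\<in>F - {b0}. \<phi> (d b) * \<psi> b)"
    using F b0 by (simp add: sum.remove)
  also have "(\<Sum>b\<in>F - {b0}. \<phi> (d b) * \<psi> b) = 0"
    using F by (intro sum.neutral) (auto simp: \<psi>(2))
  finally have "\<Phi> (\<Sum>b\<in>F. t (d b) b) = 1" using \<phi>(2) \<psi>(2) F b0 by auto
  then show False using z linear_map_zero[OF \<Phi>(1)] by simp
qed

lemma subspace_basis_expansions:
  "W.subspace {w. \<exists>F d. finite F \<and> F \<subseteq> B \<and> w = (\<Sum>b\<in>F. t (d b) b)}"
  unfolding W.subspace_def
proof (intro conjI ballI allI)
  show "0 \<in> {w. \<exists>F d. finite F \<and> F \<subseteq> B \<and> w = (\<Sum>b\<in>F. t (d b) b)}"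
    by (auto intro!: exI[of _ "{}"])
next
  fix x y assume "x \<in> {w. \<exists>F d. finite F \<and> F \<subseteq> B \<and> w = (\<Sum>b\<in>F. t (d b) b)}"
    "y \<in> {w. \<exists>F d. finite F \<and> F \<subseteq> B \<and> w = (\<Sum>b\<in>F. t (d b) b)}"
  then obtain F1 d1 F2 d2 where 1: "finite F1" "F1 \<subseteq> B" "x = (\<Sum>b\<in>F1. t (d1 b) b)"
    and 2: "finite F2" "F2 \<subseteq> B" "y = (\<Sum>b\<in>F2. t (d2 b) b)" by auto
  define d where "d b = (if b \<in> F1 then d1 b else 0) + (if b \<in> F2 then d2 b else 0)" for b
  have "(\<Sum>b\<in>F1 \<union> F2. t (d b) b) =
      (\<Sum>b\<in>F1 \<union> F2. t (if b \<in> F1 then d1 b else 0) b) + (\<Sum>b\<in>F1 \<union> F2. t (if b \<in> F2 then d2 b else 0) b)"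
    unfolding d_def by (simp add: add_left sum.distrib)
  also have "(\<Sum>b\<in>F1 \<union> F2. t (if b \<in> F1 then d1 b else 0) b) = (\<Sum>b\<in>F1. t (d1 b) b)"
    using 1 2 by (intro sum.mono_neutral_cong_right) auto
  also have "(\<Sum>b\<in>F1 \<union> F2. t (if b \<in> F2 then d2 b else 0) b) = (\<Sum>b\<in>F2. t (d2 b) b)"
    using 1 2 by (intro sum.mono_neutral_cong_right) auto
  finally show "x + y \<in> {w. \<exists>F d. finite F \<and> F \<subseteq> B \<and> w = (\<Sum>b\<in>F. t (d b) b)}"
    using 1 2 by (intro CollectI exI[of _ "F1 \<union> F2"] exI[of _ d]) auto
next
  fix c x assume "x \<in> {w. \<exists>F d. finite F \<and> F \<subseteq> B \<and> w = (\<Sum>b\<in>F. t (d b) b)}"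
  then obtain F d where F: "finite F" "F \<subseteq> B" "x = (\<Sum>b\<in>F. t (d b) b)" by auto
  then have "sw c x = (\<Sum>b\<in>F. t (su c (d b)) b)" by (simp add: W.scale_sum_right scale_left)
  then show "sw c x \<in> {w. \<exists>F d. finite F \<and> F \<subseteq> B \<and> w = (\<Sum>b\<in>F. t (d b) b)}"
    using F by (intro CollectI exI[of _ F] exI[of _ "\<lambda>b. su c (d b)"]) simp
qed

lemma tensor_basis_expansion:
  assumes B: "V.span B = UNIV"
  shows "\<exists>F d. finite F \<and> F \<subseteq> B \<and> w = (\<Sum>b\<in>F. t (d b) b)"
proof -
  have "w \<in> W.span {t u v | u v. True}" using span_tensors by simp
  then show ?thesis
  proof (rule W.span_induct[OF _ subspace_basis_expansions])
    fix x assume "x \<in> {t u v | u v. True}"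
    then obtain u v where x: "x = t u v" by auto
    have "v \<in> V.span B" using B by simp
    then obtain F r where F: "finite F" "F \<subseteq> B" "v = (\<Sum>b\<in>F. sv (r b) b)"
      unfolding V.span_explicit by blast
    then have "x = (\<Sum>b\<in>F. t (su (r b) u) b)" using x by (simp add: sum_right scale_left scale_right)
    then show "\<exists>F d. finite F \<and> F \<subseteq> B \<and> x = (\<Sum>b\<in>F. t (d b) b)"
      using F by (intro exI[of _ F] exI[of _ "\<lambda>b. su (r b) u"]) simp
  qed
qed

end

section \<open>Truncated vertex operators\<close>

text \<open>The coefficient of \<open>x\<^sub>0\<^sup>c x\<^sub>2\<^sup>j\<close> in \<open>(x\<^sub>0 + x\<^sub>2)\<^sup>c\<^sup>+\<^sup>j\<close>, expanded in nonnegative powers of \<open>x\<^sub>2\<close>.\<close>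

abbreviation expansion_coeff :: "int \<Rightarrow> nat \<Rightarrow> complex" where
  "expansion_coeff c j \<equiv> (of_int (c + int j)) gchoose j"

lemma (in vector_space) subspace_eventually_zero:
  fixes L :: "int \<Rightarrow> 'b \<Rightarrow> 'b"
  assumes "\<And>n. Vector_Spaces.linear scale scale (L n)"
  shows "subspace {w. \<exists>N. \<forall>n\<ge>N. L n w = 0}"
  unfolding subspace_def
proof (intro conjI ballI allI)
  show "0 \<in> {w. \<exists>N. \<forall>n\<ge>N. L n w = 0}" by (simp add: linear_map_zero[OF assms])
next
  fix x y assume "x \<in> {w. \<exists>N. \<forall>n\<ge>N. L n w = 0}" "y \<in> {w. \<exists>N. \<forall>n\<ge>N. L n w = 0}"
  then obtain N1 N2 where "\<forall>n\<ge>N1. L n x = 0" "\<forall>n\<ge>N2. L n y = 0" by auto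
  then have "\<forall>n\<ge>max N1 N2. L n (x + y) = 0" by (auto simp: linear_map_add[OF assms])
  then show "x + y \<in> {w. \<exists>N. \<forall>n\<ge>N. L n w = 0}" by blast
next
  fix c x assume "x \<in> {w. \<exists>N. \<forall>n\<ge>N. L n w = 0}"
  then obtain N where "\<forall>n\<ge>N. L n x = 0" by auto
  then have "\<forall>n\<ge>N. L n (scale c x) = 0" by (simp add: linear_map_scale[OF assms])
  then show "scale c x \<in> {w. \<exists>N. \<forall>n\<ge>N. L n w = 0}" by blast
qed

locale truncated_vertex_operator = vector_space sc for sc :: "complex \<Rightarrow> 'v::ab_group_add \<Rightarrow> 'v" +
  fixes Y :: "'v \<Rightarrow> 'v \<Rightarrow> int \<Rightarrow> 'v"
  assumes bilinear_modes: "bilin sc sc sc (\<lambda>u v. Y u v n)" and truncated: "truncated Y"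
begin

lemma linear_Y_left: "Vector_Spaces.linear sc sc (\<lambda>u. Y u w n)"
  using bilinear_modes by (simp add: bilin_def)

lemma linear_Y_right: "Vector_Spaces.linear sc sc (\<lambda>w. Y u w n)"
  using bilinear_modes by (simp add: bilin_def)

definition trunc_bound :: "'v \<Rightarrow> 'v \<Rightarrow> int" where
  "trunc_bound u w = (SOME N. \<forall>n\<ge>N. Y u w n = 0)"

lemma Y_nonzero_imp: "Y u w n \<noteq> 0 \<Longrightarrow> u \<noteq> 0 \<and> w \<noteq> 0 \<and> n < trunc_bound u w"
proof -
  have "\<exists>N. \<forall>n\<ge>N. Y u w n = 0" using truncated by (simp add: truncated_def)
  then have "\<forall>n\<ge>trunc_bound u w. Y u w n = 0" unfolding trunc_bound_def by (rule someI_ex)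
  then show "Y u w n \<noteq> 0 \<Longrightarrow> u \<noteq> 0 \<and> w \<noteq> 0 \<and> n < trunc_bound u w"
    using linear_map_zero[OF linear_Y_left, of w n] linear_map_zero[OF linear_Y_right, of u n]
    by (meson not_le)
qed

lemma prod_coeff_eq_sum:
  assumes "finite J" "\<And>j. j \<notin> J \<Longrightarrow> Y b c (int j - y - 1) = 0"
  shows "prod_coeff sc Y a b c x y =
    (\<Sum>j\<in>J. sc (expansion_coeff x j) (Y a (Y b c (int j - y - 1)) (- x - 1 - int j)))"
  unfolding prod_coeff_def
proof (rule Sum_any.expand_superset[OF assms(1)])
  show "{j. sc (expansion_coeff x j) (Y a (Y b c (int j - y - 1)) (- x - 1 - int j)) \<noteq> 0} \<subseteq> J"
    using assms(2) linear_map_zero[OF linear_Y_right] by force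
qed

lemma Y_eq_0_beyond_bound: "j \<notin> {..<nat (trunc_bound b c + y + 1)} \<Longrightarrow> Y b c (int j - y - 1) = 0"
  using Y_nonzero_imp[of b c "int j - y - 1"] by (cases "Y b c (int j - y - 1) = 0") auto

lemma linear_prod_coeff_left: "Vector_Spaces.linear sc sc (\<lambda>a. prod_coeff sc Y a b c x y)"
proof -
  let ?J = "{..<nat (trunc_bound b c + y + 1)}"
  have "prod_coeff sc Y a b c x y =
      (\<Sum>j\<in>?J. sc (expansion_coeff x j) (Y a (Y b c (int j - y - 1)) (- x - 1 - int j)))"
    for a by (intro prod_coeff_eq_sum) (auto simp: Y_eq_0_beyond_bound)
  then show ?thesis
    unfolding Vector_Spaces.linear_iff using vector_space_axioms
    by (simp add: linear_map_add[OF linear_Y_left] linear_map_scale[OF linear_Y_left]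
        scale_right_distrib sum.distrib scale_sum_right scale_left_commute mult.commute)
qed

lemma linear_prod_coeff_middle: "Vector_Spaces.linear sc sc (\<lambda>b. prod_coeff sc Y a b c x y)"
  unfolding Vector_Spaces.linear_iff
proof (intro conjI allI vector_space_axioms)
  fix b1 b2
  let ?J = "{..<nat (trunc_bound b1 c + y + 1)} \<union> {..<nat (trunc_bound b2 c + y + 1)}"
  have "prod_coeff sc Y a b c x y =
      (\<Sum>j\<in>?J. sc (expansion_coeff x j) (Y a (Y b c (int j - y - 1)) (- x - 1 - int j)))"
    if "b \<in> {b1, b2, b1 + b2}" for b
    using that by (intro prod_coeff_eq_sum)
      (auto simp: Y_eq_0_beyond_bound linear_map_add[OF linear_Y_left])
  then show "prod_coeff sc Y a (b1 + b2) c x y = prod_coeff sc Y a b1 c x y + prod_coeff sc Y a b2 c x y"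
    by (simp add: linear_map_add[OF linear_Y_left] linear_map_add[OF linear_Y_right]
        scale_right_distrib sum.distrib)
next
  fix k b
  let ?J = "{..<nat (trunc_bound b c + y + 1)}"
  have "prod_coeff sc Y a b' c x y =
      (\<Sum>j\<in>?J. sc (expansion_coeff x j) (Y a (Y b' c (int j - y - 1)) (- x - 1 - int j)))"
    if "b' \<in> {b, sc k b}" for b'
    using that by (intro prod_coeff_eq_sum)
      (auto simp: Y_eq_0_beyond_bound linear_map_scale[OF linear_Y_left])
  then show "prod_coeff sc Y a (sc k b) c x y = sc k (prod_coeff sc Y a b c x y)"
    by (simp add: linear_map_scale[OF linear_Y_left] linear_map_scale[OF linear_Y_right]
        scale_sum_right scale_left_commute mult.commute)
qed

lemma linear_prod_coeff_right: "Vector_Spaces.linear sc sc (\<lambda>c. prod_coeff sc Y a b c x y)"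
  unfolding Vector_Spaces.linear_iff
proof (intro conjI allI vector_space_axioms)
  fix c1 c2
  let ?J = "{..<nat (trunc_bound b c1 + y + 1)} \<union> {..<nat (trunc_bound b c2 + y + 1)}"
  have "prod_coeff sc Y a b c x y =
      (\<Sum>j\<in>?J. sc (expansion_coeff x j) (Y a (Y b c (int j - y - 1)) (- x - 1 - int j)))"
    if "c \<in> {c1, c2, c1 + c2}" for c
    using that by (intro prod_coeff_eq_sum)
      (auto simp: Y_eq_0_beyond_bound linear_map_add[OF linear_Y_right])
  then show "prod_coeff sc Y a b (c1 + c2) x y = prod_coeff sc Y a b c1 x y + prod_coeff sc Y a b c2 x y"
    by (simp add: linear_map_add[OF linear_Y_right] scale_right_distrib sum.distrib)
next
  fix k c
  let ?J = "{..<nat (trunc_bound b c + y + 1)}"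
  have "prod_coeff sc Y a b c' x y =
      (\<Sum>j\<in>?J. sc (expansion_coeff x j) (Y a (Y b c' (int j - y - 1)) (- x - 1 - int j)))"
    if "c' \<in> {c, sc k c}" for c'
    using that by (intro prod_coeff_eq_sum)
      (auto simp: Y_eq_0_beyond_bound linear_map_scale[OF linear_Y_right])
  then show "prod_coeff sc Y a b (sc k c) x y = sc k (prod_coeff sc Y a b c x y)"
    by (simp add: linear_map_scale[OF linear_Y_right] scale_sum_right scale_left_commute mult.commute)
qed

lemma linear_iter_coeff_left: "Vector_Spaces.linear sc sc (\<lambda>a. iter_coeff Y a b c x y)"
  and linear_iter_coeff_middle: "Vector_Spaces.linear sc sc (\<lambda>b. iter_coeff Y a b c x y)"
  and linear_iter_coeff_right: "Vector_Spaces.linear sc sc (\<lambda>c. iter_coeff Y a b c x y)"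
  unfolding iter_coeff_def Vector_Spaces.linear_iff using vector_space_axioms
  by (simp_all add: linear_map_add[OF linear_Y_left] linear_map_scale[OF linear_Y_left]
      linear_map_add[OF linear_Y_right] linear_map_scale[OF linear_Y_right])

end

lemma nva_imp_truncated_vertex_operator: "nva sc Y vac \<Longrightarrow> truncated_vertex_operator sc Y"
  by (simp add: nva_def truncated_vertex_operator_def truncated_vertex_operator_axioms_def)

section \<open>The smash product\<close>

locale smash_product =
  fixes G :: "('g, 'b) monoid_scheme"
    and sU :: "complex \<Rightarrow> 'u::ab_group_add \<Rightarrow> 'u" and YU :: "'u \<Rightarrow> 'u \<Rightarrow> int \<Rightarrow> 'u" and vacU :: 'u
    and act :: "'g \<Rightarrow> 'u \<Rightarrow> 'u"
    and sV :: "complex \<Rightarrow> 'v::ab_group_add \<Rightarrow> 'v" and YV :: "'v \<Rightarrow> 'v \<Rightarrow> int \<Rightarrow> 'v" and vacV :: 'v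
    and Vg :: "'g \<Rightarrow> 'v set"
    and sW :: "complex \<Rightarrow> 'w::ab_group_add \<Rightarrow> 'w" and t :: "'u \<Rightarrow> 'v \<Rightarrow> 'w"
    and YW :: "'w \<Rightarrow> 'w \<Rightarrow> int \<Rightarrow> 'w"
  assumes group: "group G"
    and nvaU: "nva sU YU vacU"
    and action: "nva_group_action G sU YU vacU act"
    and graded: "nva_G_graded G sV YV vacV Vg"
    and tensor: "is_tensor_product sU sV sW t"
    and smash: "is_smash_Y G act YU YV Vg sW t YW"
begin

lemma nvaV: "nva sV YV vacV"
  using graded by (simp add: nva_G_graded_def)

sublocale U: truncated_vertex_operator sU YU
  using nvaU by (rule nva_imp_truncated_vertex_operator)

sublocale V: truncated_vertex_operator sV YV
  using nvaV by (rule nva_imp_truncated_vertex_operator)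

sublocale W: vector_space sW
  using tensor by (simp add: is_tensor_product_def)

sublocale T: tensor_product sU sV sW t
  using tensor by (simp add: tensor_product_def tensor_product_axioms_def
      U.vector_space_axioms V.vector_space_axioms)

lemma linear_YW_left: "Vector_Spaces.linear sW sW (\<lambda>a. YW a w n)"
  and linear_YW_right: "Vector_Spaces.linear sW sW (\<lambda>w. YW a w n)"
  using smash by (simp_all add: is_smash_Y_def bilin_def)

lemma YU_vac_left: "YU vacU w n = (if n = -1 then w else 0)"
  and YU_vac_right: "n \<ge> 0 \<Longrightarrow> YU u vacU n = 0"
  and YU_vac_creation: "YU u vacU (-1) = u"
  using nvaU by (simp_all add: nva_def)

lemma YV_vac_left: "YV vacV w n = (if n = -1 then w else 0)"
  and YV_vac_right: "n \<ge> 0 \<Longrightarrow> YV v vacV n = 0"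
  and YV_vac_creation: "YV v vacV (-1) = v"
  using nvaV by (simp_all add: nva_def)

lemma one_in_carrier: "\<one>\<^bsub>G\<^esub> \<in> carrier G"
  and mult_in_carrier: "g \<in> carrier G \<Longrightarrow> h \<in> carrier G \<Longrightarrow> g \<otimes>\<^bsub>G\<^esub> h \<in> carrier G"
  using group by (simp_all add: group.is_monoid monoid.m_closed)

lemma act_vac: "g \<in> carrier G \<Longrightarrow> act g vacU = vacU"
  and act_YU: "g \<in> carrier G \<Longrightarrow> act g (YU u v n) = YU (act g u) (act g v) n"
  using action by (simp_all add: nva_group_action_def nva_aut_def)

lemma act_one: "act \<one>\<^bsub>G\<^esub> = id"
  using action by (simp add: nva_group_action_def)

lemma act_mult: "g \<in> carrier G \<Longrightarrow> h \<in> carrier G \<Longrightarrow> act (g \<otimes>\<^bsub>G\<^esub> h) x = act g (act h x)"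
  using action unfolding nva_group_action_def by (metis comp_apply)

lemma vacV_graded: "vacV \<in> Vg \<one>\<^bsub>G\<^esub>"
  and YV_graded: "g \<in> carrier G \<Longrightarrow> h \<in> carrier G \<Longrightarrow> u \<in> Vg g \<Longrightarrow> v \<in> Vg h \<Longrightarrow>
    YV u v n \<in> Vg (g \<otimes>\<^bsub>G\<^esub> h)"
  using graded by (simp_all add: nva_G_graded_def)

definition homogeneous :: "'v set" where
  "homogeneous = {v. \<exists>g\<in>carrier G. v \<in> Vg g}"

lemma homogeneous_decomposition:
  obtains F and c :: "'g \<Rightarrow> 'v" where "finite F" "\<forall>g\<in>F. c g \<in> homogeneous" "v = (\<Sum>g\<in>F. c g)"
proof -
  have "\<forall>v. \<exists>!c::'g \<Rightarrow> 'v. (\<forall>g. c g \<in> (if g \<in> carrier G then Vg g else {0})) \<and>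
      finite {g. c g \<noteq> 0} \<and> v = sum c {g. c g \<noteq> 0}"
    using graded unfolding nva_G_graded_def graded_direct_sum_def by (elim conjE)
  then obtain c :: "'g \<Rightarrow> 'v" where c: "\<forall>g. c g \<in> (if g \<in> carrier G then Vg g else {0})"
    "finite {g. c g \<noteq> 0}" "v = sum c {g. c g \<noteq> 0}"
    by (elim allE[of _ v] ex1E conjE)
  have hom: "\<forall>g\<in>{g. c g \<noteq> 0}. c g \<in> homogeneous"
  proof
    fix g assume "g \<in> {g. c g \<noteq> 0}"
    then show "c g \<in> homogeneous"
      using c(1)[rule_format, of g] unfolding homogeneous_def by (cases "g \<in> carrier G") auto
  qed
  show ?thesis by (rule that[OF c(2) hom c(3)])
qed

lemma span_homogeneous_tensors: "W.span {t u v | u v. v \<in> homogeneous} = UNIV"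
proof -
  have "t u v \<in> W.span {t u v | u v. v \<in> homogeneous}" for u v
  proof -
    obtain F and c :: "'g \<Rightarrow> 'v"
      where F: "finite F" "\<forall>g\<in>F. c g \<in> homogeneous" "v = (\<Sum>g\<in>F. c g)"
      by (rule homogeneous_decomposition[where v = v])
    have "t u v = (\<Sum>g\<in>F. t u (c g))" using F(3) T.sum_right by simp
    also have "\<dots> \<in> W.span {t u v | u v. v \<in> homogeneous}"
    proof (intro W.span_sum W.span_base)
      fix g assume "g \<in> F"
      then show "t u (c g) \<in> {t u v | u v. v \<in> homogeneous}" using F(2) by blast
    qed
    finally show ?thesis .
  qed
  then have "{t u v | u v. True} \<subseteq> W.span {t u v | u v. v \<in> homogeneous}" by auto
  then have "W.span {t u v | u v. True} \<subseteq> W.span {t u v | u v. v \<in> homogeneous}"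
    by (rule W.span_minimal) simp
  then show ?thesis using T.span_tensors by auto
qed

lemma homogeneous_tensor_induct [case_names tensor subspace]:
  assumes "\<And>u v. v \<in> homogeneous \<Longrightarrow> P (t u v)" and "W.subspace {x. P x}"
  shows "P x"
proof -
  have "x \<in> W.span {t u v | u v. v \<in> homogeneous}" using span_homogeneous_tensors by simp
  then show ?thesis by (rule W.span_induct[where P = P]) (use assms in auto)
qed

lemma YW_tensor:
  "g \<in> carrier G \<Longrightarrow> v \<in> Vg g \<Longrightarrow>
    YW (t u v) (t u' v') n = Sum_any (\<lambda>i. t (YU u (act g u') i) (YV v v' (n - 1 - i)))"
  using smash by (simp add: is_smash_Y_def)

lemma YW_vacU_tensor:
  assumes "g \<in> carrier G" "v \<in> Vg g"
  shows "YW (t vacU v) (t u' v') n = t (act g u') (YV v v' n)"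
proof -
  have "YW (t vacU v) (t u' v') n = Sum_any (\<lambda>i. if i = -1 then t (act g u') (YV v v' (n - 1 - i)) else 0)"
    unfolding YW_tensor[OF assms] by (intro Sum_any.cong) (simp add: YU_vac_left)
  then show ?thesis by simp
qed

lemma YW_tensor_vacV: "YW (t u vacV) (t u' v') n = t (YU u u' n) v'"
proof -
  have "YW (t u vacV) (t u' v') n = Sum_any (\<lambda>i. if i = n then t (YU u u' i) v' else 0)"
    unfolding YW_tensor[OF one_in_carrier vacV_graded]
    by (intro Sum_any.cong) (auto simp: YV_vac_left act_one)
  then show ?thesis by simp
qed

lemma YW_truncated: "\<exists>N. \<forall>n\<ge>N. YW a b n = 0"
proof -
  have tensor_truncated: "\<exists>N. \<forall>n\<ge>N. YW (t u v) b n = 0" if hom: "v \<in> homogeneous" for u v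
  proof -
    obtain g where g: "g \<in> carrier G" "v \<in> Vg g" using hom unfolding homogeneous_def by blast
    show ?thesis
    proof (induction b rule: homogeneous_tensor_induct)
      case (tensor u' v')
      obtain N1 where N1: "\<forall>n\<ge>N1. YU u (act g u') n = 0" using U.truncated unfolding truncated_def by blast
      obtain N2 where N2: "\<forall>n\<ge>N2. YV v v' n = 0" using V.truncated unfolding truncated_def by blast
      have "YW (t u v) (t u' v') n = 0" if "n \<ge> N1 + N2" for n
      proof -
        have "t (YU u (act g u') i) (YV v v' (n - 1 - i)) = 0" for i
          using N1 N2 that by (cases "i \<ge> N1") auto
        then show ?thesis unfolding YW_tensor[OF g] by simp
      qed
      then show ?case by blast
    next
      case subspace
      show ?case by (rule W.subspace_eventually_zero) (rule linear_YW_right)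
    qed
  qed
  show ?thesis
  proof (induction a rule: homogeneous_tensor_induct)
    case (tensor u v)
    then show ?case by (rule tensor_truncated)
  next
    case subspace
    show ?case by (rule W.subspace_eventually_zero) (rule linear_YW_left)
  qed
qed

sublocale W: truncated_vertex_operator sW YW
  using smash YW_truncated
  by (unfold_locales) (simp_all add: is_smash_Y_def truncated_def)

lemma YW_vac_left: "YW (t vacU vacV) b n = (if n = -1 then b else 0)"
proof (induction b rule: homogeneous_tensor_induct)
  case (tensor u v)
  show ?case using YW_vacU_tensor[OF one_in_carrier vacV_graded, of u v n] by (simp add: act_one YV_vac_left)
next
  case subspace
  show ?case unfolding W.subspace_def
    by (auto simp: linear_map_zero[OF linear_YW_right] linear_map_add[OF linear_YW_right]
        linear_map_scale[OF linear_YW_right])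
qed

lemma YW_vac_right: "n \<ge> 0 \<Longrightarrow> YW a (t vacU vacV) n = 0"
proof (induction a rule: homogeneous_tensor_induct)
  case (tensor u v)
  from tensor obtain g where g: "g \<in> carrier G" "v \<in> Vg g" unfolding homogeneous_def by blast
  have "t (YU u (act g vacU) i) (YV v vacV (n - 1 - i)) = 0" for i
    using \<open>n \<ge> 0\<close> by (cases "i \<ge> 0") (simp_all add: act_vac[OF g(1)] YU_vac_right YV_vac_right)
  then show ?case unfolding YW_tensor[OF g] by simp
next
  case subspace
  show ?case unfolding W.subspace_def
    by (auto simp: linear_map_zero[OF linear_YW_left] linear_map_add[OF linear_YW_left]
        linear_map_scale[OF linear_YW_left])
qed

lemma YW_vac_creation: "YW a (t vacU vacV) (-1) = a"
proof (induction a rule: homogeneous_tensor_induct)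
  case (tensor u v)
  from tensor obtain g where g: "g \<in> carrier G" "v \<in> Vg g" unfolding homogeneous_def by blast
  have "t (YU u (act g vacU) i) (YV v vacV (- 1 - 1 - i)) = (if i = -1 then t u v else 0)" for i
    by (cases "i \<ge> 0"; cases "i = -1")
      (simp_all add: act_vac[OF g(1)] YU_vac_right YU_vac_creation YV_vac_right YV_vac_creation)
  then show ?case unfolding YW_tensor[OF g] by simp
next
  case subspace
  show ?case unfolding W.subspace_def
    by (auto simp: linear_map_zero[OF linear_YW_left] linear_map_add[OF linear_YW_left]
        linear_map_scale[OF linear_YW_left])
qed

end
section \<open>Weak associativity\<close>

context smash_product
begin

definition assoc_defect :: "'w \<Rightarrow> 'w \<Rightarrow> 'w \<Rightarrow> int \<Rightarrow> int \<Rightarrow> 'w" where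
  "assoc_defect a b c x y = prod_coeff sW YW a b c x y - iter_coeff YW a b c x y"

definition weakly_assoc_triple :: "'w \<Rightarrow> 'w \<Rightarrow> 'w \<Rightarrow> bool" where
  "weakly_assoc_triple a b c \<longleftrightarrow> (\<exists>l. (mult_x0_plus_x2 ^^ l) (assoc_defect a b c) = (\<lambda>x y. 0))"

lemma weakly_assoc_triple_iff:
  "weakly_assoc_triple a b c \<longleftrightarrow>
    (\<exists>l. (mult_x0_plus_x2 ^^ l) (prod_coeff sW YW a b c) = (mult_x0_plus_x2 ^^ l) (iter_coeff YW a b c))"
  unfolding weakly_assoc_triple_def assoc_defect_def[abs_def]
  by (simp add: funpow_mult_x0_plus_x2_diff fun_eq_iff)

lemma weak_assoc_YW_if_triples:
  assumes "\<And>a b c. weakly_assoc_triple a b c" shows "weak_assoc sW YW"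
  unfolding weak_assoc_def
proof (intro allI)
  fix a b c
  obtain l where l: "(mult_x0_plus_x2 ^^ l) (prod_coeff sW YW a b c) = (mult_x0_plus_x2 ^^ l) (iter_coeff YW a b c)"
    using assms weakly_assoc_triple_iff by blast
  show "\<exists>l. \<forall>x y. mult_binom sW l (prod_coeff sW YW a b c) x y = mult_binom sW l (iter_coeff YW a b c) x y"
    by (intro exI[of _ l] allI) (simp add: mult_binom_eq_funpow[OF W.vector_space_axioms] l)
qed

lemma linear_assoc_defect_left: "Vector_Spaces.linear sW sW (\<lambda>a. assoc_defect a b c x y)"
  and linear_assoc_defect_middle: "Vector_Spaces.linear sW sW (\<lambda>b. assoc_defect a b c x y)"
  and linear_assoc_defect_right: "Vector_Spaces.linear sW sW (\<lambda>c. assoc_defect a b c x y)"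
  unfolding assoc_defect_def Vector_Spaces.linear_iff using W.vector_space_axioms
  by (simp_all add: W.scale_right_diff_distrib
      linear_map_add[OF W.linear_prod_coeff_left] linear_map_scale[OF W.linear_prod_coeff_left]
      linear_map_add[OF W.linear_iter_coeff_left] linear_map_scale[OF W.linear_iter_coeff_left]
      linear_map_add[OF W.linear_prod_coeff_middle] linear_map_scale[OF W.linear_prod_coeff_middle]
      linear_map_add[OF W.linear_iter_coeff_middle] linear_map_scale[OF W.linear_iter_coeff_middle]
      linear_map_add[OF W.linear_prod_coeff_right] linear_map_scale[OF W.linear_prod_coeff_right]
      linear_map_add[OF W.linear_iter_coeff_right] linear_map_scale[OF W.linear_iter_coeff_right])

lemma weakly_assoc_triple_if_tensors:
  assumes tensors: "\<And>u v u' v' u'' v''. v \<in> homogeneous \<Longrightarrow> v' \<in> homogeneous \<Longrightarrow>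
    weakly_assoc_triple (t u v) (t u' v') (t u'' v'')"
  shows "weakly_assoc_triple a b c"
proof -
  have subspace_right: "W.subspace {c. weakly_assoc_triple a b c}" for a b
    unfolding weakly_assoc_triple_def
    by (rule W.subspace_annihilated_by_power[of "\<lambda>c. assoc_defect a b c", OF linear_assoc_defect_right])
  have subspace_middle: "W.subspace {b. weakly_assoc_triple a b c}" for a c
    unfolding weakly_assoc_triple_def
    by (rule W.subspace_annihilated_by_power[of "\<lambda>b. assoc_defect a b c", OF linear_assoc_defect_middle])
  have subspace_left: "W.subspace {a. weakly_assoc_triple a b c}" for b c
    unfolding weakly_assoc_triple_def
    by (rule W.subspace_annihilated_by_power[of "\<lambda>a. assoc_defect a b c", OF linear_assoc_defect_left])
  have "weakly_assoc_triple (t u v) (t u' v') c" if "v \<in> homogeneous" "v' \<in> homogeneous" for u v u' v' c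
    by (rule homogeneous_tensor_induct[where P = "weakly_assoc_triple (t u v) (t u' v')"])
      (use tensors that subspace_right in auto)
  then have "weakly_assoc_triple (t u v) b c" if "v \<in> homogeneous" for u v b c
    by (rule homogeneous_tensor_induct[where P = "\<lambda>b. weakly_assoc_triple (t u v) b c"])
      (use that subspace_middle in auto)
  then show ?thesis
    by (rule homogeneous_tensor_induct[where P = "\<lambda>a. weakly_assoc_triple a b c"])
      (use subspace_left in auto)
qed

context
  fixes g h :: 'g and u u' u'' :: 'u and v v' v'' :: 'v
  assumes g: "g \<in> carrier G" "v \<in> Vg g" and h: "h \<in> carrier G" "v' \<in> Vg h"
begin

text \<open>On pure tensors with homogeneous \<open>V\<close>-parts, the \<open>V\<close>-triple \<open>(v, v', v'')\<close> is paired with the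
  \<open>U\<close>-triple \<open>(u, u\<^sub>1, u\<^sub>2) = (u, g u', g h u'')\<close>.\<close>

definition "u1 = act g u'"
definition "u2 = act g (act h u'')"

lemma act_mult_u2: "act (g \<otimes>\<^bsub>G\<^esub> h) u'' = u2"
  unfolding u2_def using act_mult g h by blast

definition iter_term :: "int \<Rightarrow> int \<Rightarrow> int \<Rightarrow> int \<Rightarrow> 'w" where
  "iter_term x y p q = t (YU (YU u u1 p) u2 q) (YV (YV v v' (- x - 2 - p)) v'' (- y - 2 - q))"

lemma finite_iter_term_support: "finite {(p, q). iter_term x y p q \<noteq> 0}"
proof (rule finite_subset)
  show "{(p, q). iter_term x y p q \<noteq> 0} \<subseteq> (SIGMA p:{- x - 1 - V.trunc_bound v v' .. U.trunc_bound u u1}.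
      {- y - 1 - V.trunc_bound (YV v v' (- x - 2 - p)) v'' .. U.trunc_bound (YU u u1 p) u2})"
  proof
    fix z assume "z \<in> {(p, q). iter_term x y p q \<noteq> 0}"
    then obtain p q where z: "z = (p, q)" "iter_term x y p q \<noteq> 0" by auto
    then have "YU (YU u u1 p) u2 q \<noteq> 0" "YV (YV v v' (- x - 2 - p)) v'' (- y - 2 - q) \<noteq> 0"
      unfolding iter_term_def by auto
    then have "YU u u1 p \<noteq> 0" "q < U.trunc_bound (YU u u1 p) u2"
      "YV v v' (- x - 2 - p) \<noteq> 0" "- y - 2 - q < V.trunc_bound (YV v v' (- x - 2 - p)) v''"
      using U.Y_nonzero_imp V.Y_nonzero_imp by blast+
    moreover from this have "p < U.trunc_bound u u1" "- x - 2 - p < V.trunc_bound v v'"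
      using U.Y_nonzero_imp V.Y_nonzero_imp by blast+
    ultimately show "z \<in> (SIGMA p:{- x - 1 - V.trunc_bound v v' .. U.trunc_bound u u1}.
        {- y - 1 - V.trunc_bound (YV v v' (- x - 2 - p)) v'' .. U.trunc_bound (YU u u1 p) u2})"
      using z by auto
  qed
qed (rule finite_SigmaI; simp)

lemma iter_coeff_tensor_expansion:
  "iter_coeff YW (t u v) (t u' v') (t u'' v'') x y = Sum_any (\<lambda>(p, q). iter_term x y p q)"
proof -
  have fin: "finite {p. t (YU u u1 p) (YV v v' (- x - 1 - 1 - p)) \<noteq> 0}"
  proof (rule finite_subset)
    show "{p. t (YU u u1 p) (YV v v' (- x - 1 - 1 - p)) \<noteq> 0} \<subseteq> {- x - 1 - V.trunc_bound v v' .. U.trunc_bound u u1}"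
    proof
      fix p assume "p \<in> {p. t (YU u u1 p) (YV v v' (- x - 1 - 1 - p)) \<noteq> 0}"
      then have "YU u u1 p \<noteq> 0" "YV v v' (- x - 1 - 1 - p) \<noteq> 0" by auto
      then have "p < U.trunc_bound u u1" "- x - 1 - 1 - p < V.trunc_bound v v'"
        using U.Y_nonzero_imp V.Y_nonzero_imp by blast+
      then show "p \<in> {- x - 1 - V.trunc_bound v v' .. U.trunc_bound u u1}" by simp
    qed
  qed simp
  have gh: "g \<otimes>\<^bsub>G\<^esub> h \<in> carrier G" "YV v v' n \<in> Vg (g \<otimes>\<^bsub>G\<^esub> h)" for n
    using mult_in_carrier YV_graded g h by blast+
  have "iter_coeff YW (t u v) (t u' v') (t u'' v'') x y =
      YW (Sum_any (\<lambda>p. t (YU u u1 p) (YV v v' (- x - 1 - 1 - p)))) (t u'' v'') (- y - 1)"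
    unfolding iter_coeff_def YW_tensor[OF g] u1_def ..
  also have "\<dots> = Sum_any (\<lambda>p. YW (t (YU u u1 p) (YV v v' (- x - 1 - 1 - p))) (t u'' v'') (- y - 1))"
    by (rule linear_map_Sum_any[OF linear_YW_left fin])
  also have "\<dots> = Sum_any (\<lambda>p. Sum_any (\<lambda>q. iter_term x y p q))"
    unfolding YW_tensor[OF gh] act_mult_u2 iter_term_def by (simp add: algebra_simps)
  also have "\<dots> = Sum_any (\<lambda>(p, q). iter_term x y p q)"
    by (rule Sum_any_case_prod[OF finite_iter_term_support])
  finally show ?thesis .
qed

lemma iter_coeff_tensor:
  "iter_coeff YW (t u v) (t u' v') (t u'' v'') = T.conv (iter_coeff YU u u1 u2) (iter_coeff YV v v' v'')"
proof (intro ext)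
  fix x y
  have "Sum_any (\<lambda>(p, q). iter_term x y p q) = T.conv (iter_coeff YU u u1 u2) (iter_coeff YV v v' v'') x y"
    unfolding T.conv_def
  proof (rule Sum_any.reindex_cong[symmetric, of "\<lambda>(p, q). (- p - 1, - q - 1)"])
    show "bij (\<lambda>(p::int, q::int). (- p - 1, - q - 1))"
      by (rule bij_betw_byWitness[where f' = "\<lambda>(p::int, q::int). (- p - 1, - q - 1)"]) auto
    show "(\<lambda>(c, d). t (iter_coeff YU u u1 u2 c d) (iter_coeff YV v v' v'' (x - c) (y - d))) \<circ>
        (\<lambda>(p, q). (- p - 1, - q - 1)) = (\<lambda>(p, q). iter_term x y p q)"
    proof (intro ext, clarsimp)
      fix p q :: int
      have e: "- (x - (- p - 1)) - 1 = - x - 2 - p" "- (y - (- q - 1)) - 1 = - y - 2 - q"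
        "- (- p - 1) - 1 = p" "- (- q - 1) - 1 = q"
        by simp_all
      show "t (iter_coeff YU u u1 u2 (- p - 1) (- q - 1)) (iter_coeff YV v v' v'' (x - (- p - 1)) (y - (- q - 1)))
          = iter_term x y p q"
        by (simp only: iter_coeff_def iter_term_def e)
    qed
  qed
  then show "iter_coeff YW (t u v) (t u' v') (t u'' v'') x y =
      T.conv (iter_coeff YU u u1 u2) (iter_coeff YV v v' v'') x y"
    by (simp only: iter_coeff_tensor_expansion)
qed

lemma conv_summable_iter_coeff: "conv_summable (iter_coeff YU u u1 u2) (iter_coeff YV v v' v'')"
  unfolding conv_summable_def
proof (intro allI)
  fix a b
  show "finite {(c, d). iter_coeff YU u u1 u2 c d \<noteq> 0 \<and> iter_coeff YV v v' v'' (a - c) (b - d) \<noteq> 0}"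
  proof (rule finite_subset)
    show "{(c, d). iter_coeff YU u u1 u2 c d \<noteq> 0 \<and> iter_coeff YV v v' v'' (a - c) (b - d) \<noteq> 0} \<subseteq>
      (SIGMA c:{- U.trunc_bound u u1 .. a + V.trunc_bound v v'}.
        {- U.trunc_bound (YU u u1 (- c - 1)) u2 .. b + V.trunc_bound (YV v v' (- (a - c) - 1)) v''})"
    proof
      fix z
      assume "z \<in> {(c, d). iter_coeff YU u u1 u2 c d \<noteq> 0 \<and> iter_coeff YV v v' v'' (a - c) (b - d) \<noteq> 0}"
      then obtain c d where z: "z = (c, d)" "iter_coeff YU u u1 u2 c d \<noteq> 0"
        "iter_coeff YV v v' v'' (a - c) (b - d) \<noteq> 0" by auto
      then have "YU (YU u u1 (- c - 1)) u2 (- d - 1) \<noteq> 0"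
        "YV (YV v v' (- (a - c) - 1)) v'' (- (b - d) - 1) \<noteq> 0"
        unfolding iter_coeff_def by auto
      then have "YU u u1 (- c - 1) \<noteq> 0" "- d - 1 < U.trunc_bound (YU u u1 (- c - 1)) u2"
        "YV v v' (- (a - c) - 1) \<noteq> 0" "- (b - d) - 1 < V.trunc_bound (YV v v' (- (a - c) - 1)) v''"
        using U.Y_nonzero_imp V.Y_nonzero_imp by blast+
      moreover from this have "- c - 1 < U.trunc_bound u u1" "- (a - c) - 1 < V.trunc_bound v v'"
        using U.Y_nonzero_imp V.Y_nonzero_imp by blast+
      ultimately show "z \<in> (SIGMA c:{- U.trunc_bound u u1 .. a + V.trunc_bound v v'}.
        {- U.trunc_bound (YU u u1 (- c - 1)) u2 .. b + V.trunc_bound (YV v v' (- (a - c) - 1)) v''})"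
        using z by auto
    qed
  qed (rule finite_SigmaI; simp)
qed

definition prod_term :: "int \<Rightarrow> int \<Rightarrow> nat \<Rightarrow> int \<Rightarrow> int \<Rightarrow> 'w" where
  "prod_term x y j i p =
    t (YU u (YU u1 u2 i) p) (YV v (YV v' v'' (int j - y - 2 - i)) (- x - 2 - int j - p))"

lemma finite_prod_term_support: "finite {(j, i, p). prod_term x y j i p \<noteq> 0}"
proof (rule finite_subset)
  let ?N1 = "U.trunc_bound u1 u2" and ?N2 = "V.trunc_bound v' v''"
  show "{(j, i, p). prod_term x y j i p \<noteq> 0} \<subseteq> (SIGMA j:{..<nat (?N1 + ?N2 + y + 2)}. SIGMA i:{- y - 1 - ?N2 .. ?N1}.
      {- x - 1 - int j - V.trunc_bound v (YV v' v'' (int j - y - 2 - i)) .. U.trunc_bound u (YU u1 u2 i)})"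
  proof
    fix z assume "z \<in> {(j, i, p). prod_term x y j i p \<noteq> 0}"
    then obtain j i p where z: "z = (j, i, p)" and "prod_term x y j i p \<noteq> 0" by auto
    then have "YU u (YU u1 u2 i) p \<noteq> 0" "YV v (YV v' v'' (int j - y - 2 - i)) (- x - 2 - int j - p) \<noteq> 0"
      unfolding prod_term_def by auto
    then have "YU u1 u2 i \<noteq> 0" "p < U.trunc_bound u (YU u1 u2 i)"
      "YV v' v'' (int j - y - 2 - i) \<noteq> 0" "- x - 2 - int j - p < V.trunc_bound v (YV v' v'' (int j - y - 2 - i))"
      using U.Y_nonzero_imp V.Y_nonzero_imp by blast+
    moreover from this have "i < ?N1" "int j - y - 2 - i < ?N2"
      using U.Y_nonzero_imp V.Y_nonzero_imp by blast+
    ultimately show "z \<in> (SIGMA j:{..<nat (?N1 + ?N2 + y + 2)}. SIGMA i:{- y - 1 - ?N2 .. ?N1}.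
      {- x - 1 - int j - V.trunc_bound v (YV v' v'' (int j - y - 2 - i)) .. U.trunc_bound u (YU u1 u2 i)})"
      using z by auto
  qed
qed (auto intro!: finite_SigmaI)

lemma YW_YW_tensor:
  "YW (t u v) (YW (t u' v') (t u'' v'') (int j - y - 1)) (- x - 1 - int j) =
    Sum_any (\<lambda>i. Sum_any (\<lambda>p. prod_term x y j i p))"
proof -
  define F where "F i = t (YU u' (act h u'') i) (YV v' v'' (int j - y - 1 - 1 - i))" for i
  have "finite {i. F i \<noteq> 0}"
  proof (rule finite_subset)
    show "{i. F i \<noteq> 0} \<subseteq> {int j - y - 1 - V.trunc_bound v' v'' .. U.trunc_bound u' (act h u'')}"
    proof
      fix i assume "i \<in> {i. F i \<noteq> 0}"
      then have "YU u' (act h u'') i \<noteq> 0" "YV v' v'' (int j - y - 1 - 1 - i) \<noteq> 0"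
        unfolding F_def by auto
      then have "i < U.trunc_bound u' (act h u'')" "int j - y - 1 - 1 - i < V.trunc_bound v' v''"
        using U.Y_nonzero_imp V.Y_nonzero_imp by blast+
      then show "i \<in> {int j - y - 1 - V.trunc_bound v' v'' .. U.trunc_bound u' (act h u'')}" by auto
    qed
  qed simp
  then have "YW (t u v) (YW (t u' v') (t u'' v'') (int j - y - 1)) (- x - 1 - int j) =
      Sum_any (\<lambda>i. YW (t u v) (F i) (- x - 1 - int j))"
    unfolding YW_tensor[OF h] F_def[symmetric] by (rule linear_map_Sum_any[OF linear_YW_right])
  also have "\<dots> = Sum_any (\<lambda>i. Sum_any (\<lambda>p. prod_term x y j i p))"
  proof (rule Sum_any.cong)
    fix i
    show "YW (t u v) (F i) (- x - 1 - int j) = Sum_any (\<lambda>p. prod_term x y j i p)"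
      unfolding F_def YW_tensor[OF g]
    proof (rule Sum_any.cong)
      fix p
      have e: "- x - 1 - int j - 1 - p = - x - 2 - int j - p" "int j - y - 1 - 1 - i = int j - y - 2 - i"
        by simp_all
      show "t (YU u (act g (YU u' (act h u'') i)) p) (YV v (YV v' v'' (int j - y - 1 - 1 - i)) (- x - 1 - int j - 1 - p))
          = prod_term x y j i p"
        unfolding prod_term_def e act_YU[OF g(1)] u1_def u2_def ..
    qed
  qed
  finally show ?thesis .
qed

lemma prod_coeff_tensor_expansion:
  "prod_coeff sW YW (t u v) (t u' v') (t u'' v'') x y =
    Sum_any (\<lambda>(j, i, p). sW (expansion_coeff x j) (prod_term x y j i p))"
proof -
  have fin: "finite {(i, p). prod_term x y j i p \<noteq> 0}" for j
    by (rule finite_subset[OF _ finite_imageI[OF finite_prod_term_support, of snd]])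
      (auto simp: image_iff)
  have "prod_coeff sW YW (t u v) (t u' v') (t u'' v'') x y =
      Sum_any (\<lambda>j. sW (expansion_coeff x j) (Sum_any (\<lambda>(i, p). prod_term x y j i p)))"
    unfolding prod_coeff_def YW_YW_tensor by (simp add: Sum_any_case_prod[OF fin])
  also have "\<dots> = Sum_any (\<lambda>j. Sum_any (\<lambda>(i, p). sW (expansion_coeff x j) (prod_term x y j i p)))"
  proof (intro Sum_any.cong)
    fix j
    have "finite {ip. (case ip of (i, p) \<Rightarrow> prod_term x y j i p) \<noteq> 0}"
      by (rule finite_subset[OF _ fin[of j]]) auto
    from linear_map_Sum_any[OF W.linear_scale_self this]
    show "sW (expansion_coeff x j) (Sum_any (\<lambda>(i, p). prod_term x y j i p)) =
        Sum_any (\<lambda>(i, p). sW (expansion_coeff x j) (prod_term x y j i p))"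
      by (simp add: case_prod_beta)
  qed
  also have "\<dots> = Sum_any (\<lambda>(j, i, p). sW (expansion_coeff x j) (prod_term x y j i p))"
  proof -
    have "finite {(j, ip). (case ip of (i, p) \<Rightarrow> sW (expansion_coeff x j) (prod_term x y j i p)) \<noteq> 0}"
      by (rule finite_subset[OF _ finite_prod_term_support]) auto
    from Sum_any_case_prod[OF this] show ?thesis by (simp add: case_prod_beta)
  qed
  finally show ?thesis .
qed

lemma tensor_prod_coeff:
  "t (prod_coeff sU YU u u1 u2 c d) (prod_coeff sV YV v v' v'' (x - c) (y - d)) =
    Sum_any (\<lambda>(j1, j2). sW (expansion_coeff c j1 * expansion_coeff (x - c) j2)
      (t (YU u (YU u1 u2 (int j1 - d - 1)) (- c - 1 - int j1))
         (YV v (YV v' v'' (int j2 - (y - d) - 1)) (- (x - c) - 1 - int j2))))"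
proof -
  define f where "f j1 = sU (expansion_coeff c j1) (YU u (YU u1 u2 (int j1 - d - 1)) (- c - 1 - int j1))" for j1
  define f' where "f' j2 = sV (expansion_coeff (x - c) j2)
    (YV v (YV v' v'' (int j2 - (y - d) - 1)) (- (x - c) - 1 - int j2))" for j2
  have "{j1. f j1 \<noteq> 0} \<subseteq> {..<nat (U.trunc_bound u1 u2 + d + 1)}"
  proof
    fix j1 assume "j1 \<in> {j1. f j1 \<noteq> 0}"
    then have "YU u (YU u1 u2 (int j1 - d - 1)) (- c - 1 - int j1) \<noteq> 0" unfolding f_def by auto
    then have "YU u1 u2 (int j1 - d - 1) \<noteq> 0" using U.Y_nonzero_imp by blast
    then have "int j1 - d - 1 < U.trunc_bound u1 u2" using U.Y_nonzero_imp by blast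
    then show "j1 \<in> {..<nat (U.trunc_bound u1 u2 + d + 1)}" by simp
  qed
  then have fin: "finite {j1. f j1 \<noteq> 0}" by (rule finite_subset) simp
  have "{j2. f' j2 \<noteq> 0} \<subseteq> {..<nat (V.trunc_bound v' v'' + (y - d) + 1)}"
  proof
    fix j2 assume "j2 \<in> {j2. f' j2 \<noteq> 0}"
    then have "YV v (YV v' v'' (int j2 - (y - d) - 1)) (- (x - c) - 1 - int j2) \<noteq> 0" unfolding f'_def by auto
    then have "YV v' v'' (int j2 - (y - d) - 1) \<noteq> 0" using V.Y_nonzero_imp by blast
    then have "int j2 - (y - d) - 1 < V.trunc_bound v' v''" using V.Y_nonzero_imp by blast
    then show "j2 \<in> {..<nat (V.trunc_bound v' v'' + (y - d) + 1)}" by simp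
  qed
  then have fin': "finite {j2. f' j2 \<noteq> 0}" by (rule finite_subset) simp
  have "t (Sum_any f) (Sum_any f') = Sum_any (\<lambda>j1. t (f j1) (Sum_any f'))"
    by (rule T.Sum_any_left[OF fin])
  also have "\<dots> = Sum_any (\<lambda>j1. Sum_any (\<lambda>j2. t (f j1) (f' j2)))"
    by (intro Sum_any.cong T.Sum_any_right[OF fin'])
  also have "\<dots> = Sum_any (\<lambda>(j1, j2). t (f j1) (f' j2))"
    by (rule Sum_any_case_prod, rule finite_subset[of _ "{j1. f j1 \<noteq> 0} \<times> {j2. f' j2 \<noteq> 0}"])
      (use fin fin' in auto)
  finally show ?thesis
    unfolding prod_coeff_def f_def f'_def by (simp add: T.scale_left T.scale_right mult.commute)
qed

definition split_prod_term :: "int \<Rightarrow> int \<Rightarrow> (int \<times> int) \<times> nat \<times> nat \<Rightarrow> 'w" where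
  "split_prod_term x y = (\<lambda>((p, i), (j1, j2)).
    sW (expansion_coeff (- p - 1 - int j1) j1 * expansion_coeff (x + p + 1 + int j1) j2) (prod_term x y (j1 + j2) i p))"

lemma finite_split_prod_term_support: "finite {z. split_prod_term x y z \<noteq> 0}"
proof -
  let ?S = "{(j, i, p). prod_term x y j i p \<noteq> 0}"
  have "{z. split_prod_term x y z \<noteq> 0} \<subseteq> (\<Union>(j, i, p)\<in>?S. (\<lambda>j1. ((p, i), (j1, j - j1))) ` {..j})"
  proof clarify
    fix p i j1 j2 assume "split_prod_term x y ((p, i), (j1, j2)) \<noteq> 0"
    then have "(j1 + j2, i, p) \<in> ?S" unfolding split_prod_term_def by auto
    moreover have "((p, i), (j1, j2)) \<in> (\<lambda>j1'. ((p, i), (j1', j1 + j2 - j1'))) ` {..j1 + j2}"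
      by (intro image_eqI[of _ _ j1]) auto
    ultimately show "((p, i), (j1, j2)) \<in> (\<Union>(j, i, p)\<in>?S. (\<lambda>j1. ((p, i), (j1, j - j1))) ` {..j})"
      by fastforce
  qed
  then show ?thesis
    by (rule finite_subset) (use finite_prod_term_support in \<open>auto intro!: finite_UN_I\<close>)
qed

lemma Sum_any_split_prod_term_Vandermonde:
  "Sum_any (\<lambda>jj. split_prod_term x y ((p, i), jj)) = Sum_any (\<lambda>j. sW (expansion_coeff x j) (prod_term x y j i p))"
proof -
  have fin: "finite {(j1, j2). split_prod_term x y ((p, i), (j1, j2)) \<noteq> 0}"
    by (rule finite_subset[OF _ finite_imageI[OF finite_split_prod_term_support, of snd]])
      (force simp: image_iff)
  have eq: "(\<lambda>(j1, j2). split_prod_term x y ((p, i), (j1, j2))) = (\<lambda>jj. split_prod_term x y ((p, i), jj))"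
    by (auto simp: fun_eq_iff)
  have "Sum_any (\<lambda>jj. split_prod_term x y ((p, i), jj)) =
      Sum_any (\<lambda>j. \<Sum>j1\<le>j. split_prod_term x y ((p, i), (j1, j - j1)))"
    using Sum_any_triangle[OF fin] unfolding eq .
  also have "\<dots> = Sum_any (\<lambda>j. sW (expansion_coeff x j) (prod_term x y j i p))"
  proof (rule Sum_any.cong)
    fix j
    have "(\<Sum>j1\<le>j. expansion_coeff (- p - 1 - int j1) j1 * expansion_coeff (x + p + 1 + int j1) (j - j1)) =
        (\<Sum>j1\<le>j. (of_int (- p - 1) gchoose j1) * (of_int (x + p + 1 + int j) gchoose (j - j1)))"
    proof (intro sum.cong refl)
      fix j1 assume "j1 \<in> {..j}"
      then have "- p - 1 - int j1 + int j1 = - p - 1" "x + p + 1 + int j1 + int (j - j1) = x + p + 1 + int j"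
        by auto
      then show "expansion_coeff (- p - 1 - int j1) j1 * expansion_coeff (x + p + 1 + int j1) (j - j1) =
          (of_int (- p - 1) gchoose j1) * (of_int (x + p + 1 + int j) gchoose (j - j1))"
        by (simp only:)
    qed
    also have "\<dots> = (of_int (- p - 1) + of_int (x + p + 1 + int j)) gchoose j"
      using gbinomial_Vandermonde[of "of_int (- p - 1) :: complex" "of_int (x + p + 1 + int j)" j]
      by (simp add: atLeast0AtMost)
    finally have "(\<Sum>j1\<le>j. expansion_coeff (- p - 1 - int j1) j1 * expansion_coeff (x + p + 1 + int j1) (j - j1)) =
        expansion_coeff x j" by simp
    then show "(\<Sum>j1\<le>j. split_prod_term x y ((p, i), (j1, j - j1))) = sW (expansion_coeff x j) (prod_term x y j i p)"
      by (simp add: split_prod_term_def W.scale_sum_left[symmetric])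
  qed
  finally show ?thesis .
qed

lemma Sum_any_split_prod_term:
  "Sum_any (split_prod_term x y) = Sum_any (\<lambda>(j, i, p). sW (expansion_coeff x j) (prod_term x y j i p))"
proof -
  have "{(pi, jj). split_prod_term x y (pi, jj) \<noteq> 0} = {z. split_prod_term x y z \<noteq> 0}" by auto
  then have "Sum_any (split_prod_term x y) = Sum_any (\<lambda>pi. Sum_any (\<lambda>jj. split_prod_term x y (pi, jj)))"
    using Sum_any_case_prod[of "\<lambda>pi jj. split_prod_term x y (pi, jj)"] finite_split_prod_term_support
    by (simp add: case_prod_beta)
  also have "\<dots> = Sum_any (\<lambda>(p, i). Sum_any (\<lambda>j. sW (expansion_coeff x j) (prod_term x y j i p)))"
    by (intro Sum_any.cong) (auto simp: Sum_any_split_prod_term_Vandermonde case_prod_beta)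
  also have "\<dots> = Sum_any (\<lambda>((p, i), j). sW (expansion_coeff x j) (prod_term x y j i p))"
  proof -
    have "finite {(pi, j). sW (expansion_coeff x j) (prod_term x y j (snd pi) (fst pi)) \<noteq> 0}"
      by (rule finite_subset[OF _ finite_imageI[OF finite_prod_term_support, of "\<lambda>(j, i, p). ((p, i), j)"]])
        (auto simp: image_iff)
    from Sum_any_case_prod[OF this] show ?thesis by (simp add: case_prod_beta)
  qed
  also have "\<dots> = Sum_any (\<lambda>(j, i, p). sW (expansion_coeff x j) (prod_term x y j i p))"
  proof (rule Sum_any.reindex_cong[of "\<lambda>(j, i, p). ((p, i), j)"])
    show "bij (\<lambda>(j::nat, i::int, p::int). ((p, i), j))"
      by (rule bij_betw_byWitness[where f' = "\<lambda>((p, i), j). (j, i, p)"]) auto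
  qed (auto simp: fun_eq_iff)
  finally show ?thesis .
qed

lemma conv_prod_coeff_eq_Sum_any_split:
  "T.conv (prod_coeff sU YU u u1 u2) (prod_coeff sV YV v v' v'') x y = Sum_any (split_prod_term x y)"
proof -
  define Q where "Q = (\<lambda>((c, d), (j1::nat, j2::nat)). sW (expansion_coeff c j1 * expansion_coeff (x - c) j2)
    (t (YU u (YU u1 u2 (int j1 - d - 1)) (- c - 1 - int j1))
       (YV v (YV v' v'' (int j2 - (y - d) - 1)) (- (x - c) - 1 - int j2))))"
  define \<phi> where "\<phi> = (\<lambda>((p::int, i::int), (j1::nat, j2::nat)). ((- p - 1 - int j1, int j1 - 1 - i), (j1, j2)))"
  define \<psi> where "\<psi> = (\<lambda>((c::int, d::int), (j1::nat, j2::nat)). ((- c - 1 - int j1, int j1 - d - 1), (j1, j2)))"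
  have \<phi>\<psi>: "\<phi> (\<psi> z) = z" and \<psi>\<phi>: "\<psi> (\<phi> z) = z" for z
    unfolding \<phi>_def \<psi>_def by (auto split: prod.splits)
  have bij: "bij \<phi>" by (rule bij_betw_byWitness[where f' = \<psi>]) (use \<phi>\<psi> \<psi>\<phi> in auto)
  have Q\<phi>: "Q \<circ> \<phi> = split_prod_term x y"
  proof (intro ext, clarsimp simp: \<phi>_def)
    fix p i :: int and j1 j2 :: nat
    have e: "x - (- p - 1 - int j1) = x + p + 1 + int j1"
      "- (- p - 1 - int j1) - 1 - int j1 = p" "int j1 - (int j1 - 1 - i) - 1 = i"
      "- (x + p + 1 + int j1) - 1 - int j2 = - x - 2 - int (j1 + j2) - p"
      "int j2 - (y - (int j1 - 1 - i)) - 1 = int (j1 + j2) - y - 2 - i" by simp_all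
    show "Q ((- p - 1 - int j1, int j1 - 1 - i), j1, j2) = split_prod_term x y ((p, i), j1, j2)"
      unfolding Q_def split_prod_term_def prod_term_def by (simp only: e prod.case)
  qed
  have "{z. Q z \<noteq> 0} \<subseteq> \<phi> ` {z. split_prod_term x y z \<noteq> 0}"
  proof
    fix z assume "z \<in> {z. Q z \<noteq> 0}"
    moreover have "split_prod_term x y (\<psi> z) = Q (\<phi> (\<psi> z))" unfolding Q\<phi>[symmetric] by simp
    ultimately have "\<psi> z \<in> {z. split_prod_term x y z \<noteq> 0}" using \<phi>\<psi>[of z] by simp
    then show "z \<in> \<phi> ` {z. split_prod_term x y z \<noteq> 0}" using \<phi>\<psi>[of z] by (metis image_eqI)
  qed
  then have "finite {z. Q z \<noteq> 0}" by (rule finite_subset) (use finite_split_prod_term_support in simp)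
  moreover have "{(cd, jj). Q (cd, jj) \<noteq> 0} = {z. Q z \<noteq> 0}" by auto
  ultimately have finQ: "finite {(cd, jj). Q (cd, jj) \<noteq> 0}" by simp
  have "T.conv (prod_coeff sU YU u u1 u2) (prod_coeff sV YV v v' v'') x y =
      Sum_any (\<lambda>cd. Sum_any (\<lambda>jj. Q (cd, jj)))"
    unfolding T.conv_def tensor_prod_coeff Q_def by (simp add: case_prod_beta)
  also have "\<dots> = Sum_any Q"
    using Sum_any_case_prod[OF finQ] by (simp add: case_prod_beta)
  also have "\<dots> = Sum_any (split_prod_term x y)" by (rule Sum_any.reindex_cong[OF bij Q\<phi>])
  finally show ?thesis .
qed

lemma prod_coeff_tensor:
  "prod_coeff sW YW (t u v) (t u' v') (t u'' v'') = T.conv (prod_coeff sU YU u u1 u2) (prod_coeff sV YV v v' v'')"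
  by (intro ext) (simp only: prod_coeff_tensor_expansion conv_prod_coeff_eq_Sum_any_split Sum_any_split_prod_term)

lemma conv_summable_prod_coeff: "conv_summable (prod_coeff sU YU u u1 u2) (prod_coeff sV YV v v' v'')"
  unfolding conv_summable_def
proof (intro allI)
  fix a b
  let ?N1 = "U.trunc_bound u1 u2" and ?N2 = "V.trunc_bound v' v''"
  define lo where "lo j d = - 1 - int j - U.trunc_bound u (YU u1 u2 (int j - d - 1))" for j d
  define hi where "hi j' d = a + 1 + int j' + V.trunc_bound v (YV v' v'' (int j' - (b - d) - 1))" for j' d
  let ?B = "\<Union>d\<in>{- ?N1 .. b + ?N2}. \<Union>j\<in>{..<nat (?N1 + d + 1)}. \<Union>j'\<in>{..<nat (?N2 + b - d + 1)}.
    {lo j d .. hi j' d} \<times> {d}"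
  show "finite {(c, d). prod_coeff sU YU u u1 u2 c d \<noteq> 0 \<and> prod_coeff sV YV v v' v'' (a - c) (b - d) \<noteq> 0}"
  proof (rule finite_subset)
    show "finite ?B" by (intro finite_UN_I) auto
    show "{(c, d). prod_coeff sU YU u u1 u2 c d \<noteq> 0 \<and> prod_coeff sV YV v v' v'' (a - c) (b - d) \<noteq> 0} \<subseteq> ?B"
    proof
      fix z
      assume "z \<in> {(c, d). prod_coeff sU YU u u1 u2 c d \<noteq> 0 \<and> prod_coeff sV YV v v' v'' (a - c) (b - d) \<noteq> 0}"
      then obtain c d where z: "z = (c, d)" and
        PU: "prod_coeff sU YU u u1 u2 c d \<noteq> 0" and PV: "prod_coeff sV YV v v' v'' (a - c) (b - d) \<noteq> 0"
        by auto
      obtain j where "sU (expansion_coeff c j) (YU u (YU u1 u2 (int j - d - 1)) (- c - 1 - int j)) \<noteq> 0"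
        using PU unfolding prod_coeff_def by (rule Sum_any.not_neutral_obtains_not_neutral)
      moreover obtain j' where
        "sV (expansion_coeff (a - c) j') (YV v (YV v' v'' (int j' - (b - d) - 1)) (- (a - c) - 1 - int j')) \<noteq> 0"
        using PV unfolding prod_coeff_def by (rule Sum_any.not_neutral_obtains_not_neutral)
      ultimately have "YU u (YU u1 u2 (int j - d - 1)) (- c - 1 - int j) \<noteq> 0"
        "YV v (YV v' v'' (int j' - (b - d) - 1)) (- (a - c) - 1 - int j') \<noteq> 0"
        by auto
      then have "YU u1 u2 (int j - d - 1) \<noteq> 0" "- c - 1 - int j < U.trunc_bound u (YU u1 u2 (int j - d - 1))"
        "YV v' v'' (int j' - (b - d) - 1) \<noteq> 0"
        "- (a - c) - 1 - int j' < V.trunc_bound v (YV v' v'' (int j' - (b - d) - 1))"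
        using U.Y_nonzero_imp V.Y_nonzero_imp by blast+
      moreover from this have "int j - d - 1 < ?N1" "int j' - (b - d) - 1 < ?N2"
        using U.Y_nonzero_imp V.Y_nonzero_imp by blast+
      ultimately have "d \<in> {- ?N1 .. b + ?N2}" "j \<in> {..<nat (?N1 + d + 1)}" "j' \<in> {..<nat (?N2 + b - d + 1)}"
        "z \<in> {lo j d .. hi j' d} \<times> {d}"
        using z unfolding lo_def hi_def by auto
      then show "z \<in> ?B" by blast
    qed
  qed
qed

lemma weakly_assoc_tensor_triple: "weakly_assoc_triple (t u v) (t u' v') (t u'' v'')"
proof -
  obtain l1 where l1: "\<forall>x y. mult_binom sU l1 (prod_coeff sU YU u u1 u2) x y = mult_binom sU l1 (iter_coeff YU u u1 u2) x y"
    using nvaU unfolding nva_def weak_assoc_def by blast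
  obtain l2 where l2: "\<forall>x y. mult_binom sV l2 (prod_coeff sV YV v v' v'') x y = mult_binom sV l2 (iter_coeff YV v v' v'') x y"
    using nvaV unfolding nva_def weak_assoc_def by blast
  have U_eq: "(mult_x0_plus_x2 ^^ l1) (prod_coeff sU YU u u1 u2) = (mult_x0_plus_x2 ^^ l1) (iter_coeff YU u u1 u2)"
    using l1 unfolding mult_binom_eq_funpow[OF U.vector_space_axioms] by (simp add: fun_eq_iff)
  have V_eq: "(mult_x0_plus_x2 ^^ l2) (prod_coeff sV YV v v' v'') = (mult_x0_plus_x2 ^^ l2) (iter_coeff YV v v' v'')"
    using l2 unfolding mult_binom_eq_funpow[OF V.vector_space_axioms] by (simp add: fun_eq_iff)
  have "(mult_x0_plus_x2 ^^ (l1 + l2)) (prod_coeff sW YW (t u v) (t u' v') (t u'' v''))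
      = T.conv ((mult_x0_plus_x2 ^^ l1) (prod_coeff sU YU u u1 u2)) ((mult_x0_plus_x2 ^^ l2) (prod_coeff sV YV v v' v''))"
    unfolding prod_coeff_tensor by (rule T.conv_funpow_mult[OF conv_summable_prod_coeff])
  also have "\<dots> = T.conv ((mult_x0_plus_x2 ^^ l1) (iter_coeff YU u u1 u2)) ((mult_x0_plus_x2 ^^ l2) (iter_coeff YV v v' v''))"
    unfolding U_eq V_eq ..
  also have "\<dots> = (mult_x0_plus_x2 ^^ (l1 + l2)) (iter_coeff YW (t u v) (t u' v') (t u'' v''))"
    unfolding iter_coeff_tensor by (rule T.conv_funpow_mult[OF conv_summable_iter_coeff, symmetric])
  finally show ?thesis unfolding weakly_assoc_triple_iff by blast
qed

end

lemma weak_assoc_YW: "weak_assoc sW YW"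
proof (rule weak_assoc_YW_if_triples, rule weakly_assoc_triple_if_tensors)
  fix u v u' v' u'' v''
  assume "v \<in> homogeneous" "v' \<in> homogeneous"
  then obtain g h where "g \<in> carrier G" "v \<in> Vg g" "h \<in> carrier G" "v' \<in> Vg h"
    unfolding homogeneous_def by blast
  then show "weakly_assoc_triple (t u v) (t u' v') (t u'' v'')" by (rule weakly_assoc_tensor_triple)
qed

lemma nva_W: "nva sW YW (t vacU vacV)"
  unfolding nva_def
  using W.vector_space_axioms W.bilinear_modes W.truncated YW_vac_left YW_vac_right YW_vac_creation weak_assoc_YW
  by blast

end

section \<open>Irreducibility\<close>

locale irreducible_smash_product = smash_product G sU YU vacU act sV YV vacV Vg sW t YW
  for G :: "('g, 'b) monoid_scheme"
    and sU :: "complex \<Rightarrow> 'u::ab_group_add \<Rightarrow> 'u" and YU :: "'u \<Rightarrow> 'u \<Rightarrow> int \<Rightarrow> 'u" and vacU :: 'u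
    and act :: "'g \<Rightarrow> 'u \<Rightarrow> 'u"
    and sV :: "complex \<Rightarrow> 'v::ab_group_add \<Rightarrow> 'v" and YV :: "'v \<Rightarrow> 'v \<Rightarrow> int \<Rightarrow> 'v" and vacV :: 'v
    and Vg :: "'g \<Rightarrow> 'v set"
    and sW :: "complex \<Rightarrow> 'w::ab_group_add \<Rightarrow> 'w" and t :: "'u \<Rightarrow> 'v \<Rightarrow> 'w"
    and YW :: "'w \<Rightarrow> 'w \<Rightarrow> int \<Rightarrow> 'w" +
  assumes irreducible_U: "nva_irreducible sU YU vacU"
    and irreducible_V: "nva_irreducible sV YV vacV"
    and countable_dim_U: "countable_dim sU"
begin

sublocale U: countable_dim_irreducible_operators sU "\<lambda>(u, n) w. YU u w n"
proof -
  have "irreducible_operators_axioms sU (\<lambda>(u, n) w. YU u w n)"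
    apply (rule irreducible_operators_axioms.intro)
    subgoal for i by (cases i) (simp add: U.linear_Y_right)
    subgoal for S using irreducible_U unfolding nva_irreducible_def by fastforce
    done
  moreover have "countable_dim_irreducible_operators_axioms sU"
    using countable_dim_U unfolding countable_dim_irreducible_operators_axioms_def countable_dim_def
    by blast
  ultimately show "countable_dim_irreducible_operators sU (\<lambda>(u, n) w. YU u w n)"
    by (simp add: countable_dim_irreducible_operators_def complex_vector_space_def
        irreducible_operators_def U.vector_space_axioms)
qed

lemma V_irreducible:
  "V.subspace S \<Longrightarrow> (\<And>v w n. w \<in> S \<Longrightarrow> YV v w n \<in> S) \<Longrightarrow> S = {0} \<or> S = UNIV"
  using irreducible_V unfolding nva_irreducible_def by blast

lemma vacU_nonzero_if_nontrivial: "(u :: 'u) \<noteq> 0 \<Longrightarrow> vacU \<noteq> 0"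
  using YU_vac_creation[of u] linear_map_zero[OF U.linear_Y_right[of u "-1"]] by auto

text \<open>Fix a nonzero element \<open>\<Sum>\<^sub>b d\<^sub>b \<otimes> b\<close> of a submodule \<open>S\<close>, \<open>b\<close> ranging over a finite part \<open>F\<close>
  of a basis of \<open>V\<close>, with \<open>F\<close> as small as possible. By minimality, the coefficient \<open>x\<close> at \<open>b\<^sub>0\<close>
  determines all others among the elements of \<open>S\<close> supported on \<open>F\<close>.\<close>

context
  fixes S :: "'w set" and B F :: "'v set" and d :: "'v \<Rightarrow> 'u" and b0 :: 'v
  assumes S: "W.subspace S" and S_closed: "\<And>a w n. w \<in> S \<Longrightarrow> YW a w n \<in> S"
    and B: "V.independent B" and F: "finite F" "F \<subseteq> B" and d: "(\<Sum>b\<in>F. t (d b) b) \<in> S"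
    and b0: "b0 \<in> F" "d b0 \<noteq> 0"
    and minimal: "\<And>F' d'. F' \<subseteq> B \<Longrightarrow> card F' < card F \<Longrightarrow> (\<Sum>b\<in>F'. t (d' b) b) \<in> S \<Longrightarrow>
      (\<Sum>b\<in>F'. t (d' b) b) = 0"
begin

definition coeff_rel :: "'u \<Rightarrow> ('v \<Rightarrow> 'u) \<Rightarrow> bool" where
  "coeff_rel x e \<longleftrightarrow> e b0 = x \<and> (\<Sum>b\<in>F. t (e b) b) \<in> S"

lemma coeff_rel_unique:
  assumes "coeff_rel x e" "coeff_rel x e'" "b \<in> F"
  shows "e b = e' b"
proof -
  have "(\<Sum>b\<in>F. t (e b - e' b) b) = (\<Sum>b\<in>F. t (e b) b) - (\<Sum>b\<in>F. t (e' b) b)"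
    by (simp add: T.diff_left sum_subtractf)
  also have "\<dots> \<in> S" using assms(1,2) W.subspace_diff[OF S] unfolding coeff_rel_def by blast
  finally have "(\<Sum>b\<in>F. t (e b - e' b) b) \<in> S" .
  moreover have "(\<Sum>b\<in>F. t (e b - e' b) b) = (\<Sum>b\<in>F - {b0}. t (e b - e' b) b)"
    using F(1) b0(1) assms(1,2) unfolding coeff_rel_def by (simp add: sum.remove)
  ultimately have z: "(\<Sum>b\<in>F - {b0}. t (e b - e' b) b) = 0"
    using F card_Diff1_less[OF F(1) b0(1)] by (intro minimal) auto
  have "e b - e' b = 0" if "b \<in> F - {b0}" for b
    using T.tensor_independent_coeff_eq_0[OF B _ _ z that] F by auto
  then show ?thesis using assms unfolding coeff_rel_def by (cases "b = b0") auto
qed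

lemma coeff_rel_add: "coeff_rel x e \<Longrightarrow> coeff_rel y e' \<Longrightarrow> coeff_rel (x + y) (\<lambda>b. e b + e' b)"
  unfolding coeff_rel_def using W.subspace_add[OF S] by (simp add: T.add_left sum.distrib)

lemma coeff_rel_scale: "coeff_rel x e \<Longrightarrow> coeff_rel (sU c x) (\<lambda>b. sU c (e b))"
  unfolding coeff_rel_def using W.subspace_scale[OF S] by (simp add: T.scale_left W.scale_sum_right[symmetric])

lemma coeff_rel_YU: "coeff_rel x e \<Longrightarrow> coeff_rel (YU u x n) (\<lambda>b. YU u (e b) n)"
proof -
  have "YW (t u vacV) (\<Sum>b\<in>F. t (e b) b) n = (\<Sum>b\<in>F. t (YU u (e b) n) b)"
    by (simp add: linear_map_sum[OF linear_YW_right] YW_tensor_vacV)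
  then show "coeff_rel x e \<Longrightarrow> coeff_rel (YU u x n) (\<lambda>b. YU u (e b) n)"
    unfolding coeff_rel_def using S_closed by metis
qed

lemma coeff_rel_exists: "\<exists>e. coeff_rel x e"
proof -
  let ?M = "{x. \<exists>e. coeff_rel x e}"
  have "U.subspace ?M"
    unfolding U.subspace_def
  proof (intro conjI ballI allI)
    show "0 \<in> ?M" unfolding coeff_rel_def using W.subspace_0[OF S]
      by (intro CollectI exI[of _ "\<lambda>_. 0"]) simp
    show "x + y \<in> ?M" if "x \<in> ?M" "y \<in> ?M" for x y
      using that coeff_rel_add by blast
    show "sU c x \<in> ?M" if "x \<in> ?M" for c x
      using that coeff_rel_scale by blast
  qed
  moreover have "(\<lambda>(u, n) w. YU u w n) i w \<in> ?M" if "w \<in> ?M" for i w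
  proof -
    obtain e where e: "coeff_rel w e" using \<open>w \<in> ?M\<close> by blast
    obtain u n where "i = (u, n)" by fastforce
    then show ?thesis using coeff_rel_YU[OF e, of u n] by auto
  qed
  moreover have "d b0 \<in> ?M" using d unfolding coeff_rel_def by blast
  ultimately have "?M = UNIV" using U.irreducible b0(2) by blast
  then show ?thesis by blast
qed

definition coeff :: "'u \<Rightarrow> 'v \<Rightarrow> 'u" where
  "coeff x = (SOME e. coeff_rel x e)"

lemma coeff_rel_coeff: "coeff_rel x (coeff x)"
  unfolding coeff_def using coeff_rel_exists by (rule someI_ex)

lemma intertwiner_coeff:
  assumes "b \<in> F" shows "U.intertwiner (\<lambda>x. coeff x b)"
  unfolding U.intertwiner_def Vector_Spaces.linear_iff
proof (intro conjI allI U.vector_space_axioms)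
  show "coeff (x + y) b = coeff x b + coeff y b" for x y
    using coeff_rel_unique[OF coeff_rel_coeff coeff_rel_add[OF coeff_rel_coeff coeff_rel_coeff] assms] .
  show "coeff (sU c x) b = sU c (coeff x b)" for c x
    using coeff_rel_unique[OF coeff_rel_coeff coeff_rel_scale[OF coeff_rel_coeff] assms] .
  show "coeff ((\<lambda>(u, n) w. YU u w n) i w) b = (\<lambda>(u, n) w. YU u w n) i (coeff w b)" for i w
    using coeff_rel_unique[OF coeff_rel_coeff coeff_rel_YU[OF coeff_rel_coeff] assms] by (cases i) simp
qed

lemma vac_tensor_in_submodule: "\<exists>y. t vacU y \<in> S \<and> y \<noteq> 0"
proof -
  have "\<forall>b\<in>F. \<exists>c. \<forall>x. coeff x b = sU c x"
    using U.dixmier[OF intertwiner_coeff] by blast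
  then obtain c where c: "\<And>b x. b \<in> F \<Longrightarrow> coeff x b = sU (c b) x"
    by metis
  have "coeff vacU b0 = vacU" using coeff_rel_coeff[of vacU] unfolding coeff_rel_def by simp
  then have "c b0 \<noteq> 0" using c[OF b0(1), of vacU] vacU_nonzero_if_nontrivial[OF b0(2)] by auto
  define y where "y = (\<Sum>b\<in>F. sV (c b) b)"
  have "t vacU y = (\<Sum>b\<in>F. t (coeff vacU b) b)"
    unfolding y_def by (simp add: T.sum_right T.scale_left T.scale_right c)
  then have "t vacU y \<in> S" using coeff_rel_coeff unfolding coeff_rel_def by simp
  moreover have "y \<noteq> 0"
    using V.independentD[OF B F(1) F(2), of c b0] b0 \<open>c b0 \<noteq> 0\<close> unfolding y_def by auto
  ultimately show ?thesis by blast
qed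

end

lemma submodule_minimal_expansion:
  assumes B: "V.span B = UNIV" and s: "s \<in> S" "s \<noteq> 0"
  obtains F d where "finite F" "F \<subseteq> B" "(\<Sum>b\<in>F. t (d b) b) \<in> S" "(\<Sum>b\<in>F. t (d b) b) \<noteq> 0"
    "\<forall>F' d'. F' \<subseteq> B \<longrightarrow> card F' < card F \<longrightarrow> (\<Sum>b\<in>F'. t (d' b) b) \<in> S \<longrightarrow>
      (\<Sum>b\<in>F'. t (d' b) b) = 0"
proof -
  define K where "K = {k. \<exists>F d. finite F \<and> F \<subseteq> B \<and> card F = k \<and>
    (\<Sum>b\<in>F. t (d b) b) \<in> S \<and> (\<Sum>b\<in>F. t (d b) b) \<noteq> 0}"
  obtain F0 d0 where "finite F0" "F0 \<subseteq> B" "s = (\<Sum>b\<in>F0. t (d0 b) b)"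
    using T.tensor_basis_expansion[OF B] by blast
  then have "card F0 \<in> K" unfolding K_def using s by blast
  then have "(LEAST k. k \<in> K) \<in> K" by (rule LeastI)
  then obtain F d where F: "finite F" "F \<subseteq> B" "card F = (LEAST k. k \<in> K)"
    "(\<Sum>b\<in>F. t (d b) b) \<in> S" "(\<Sum>b\<in>F. t (d b) b) \<noteq> 0"
    unfolding K_def by blast
  have minimal: "(\<Sum>b\<in>F'. t (d' b) b) = 0"
    if "F' \<subseteq> B" "card F' < card F" "(\<Sum>b\<in>F'. t (d' b) b) \<in> S" for F' d'
  proof (rule ccontr)
    assume "(\<Sum>b\<in>F'. t (d' b) b) \<noteq> 0"
    then have "finite F'" by (meson sum.infinite)
    with that \<open>(\<Sum>b\<in>F'. t (d' b) b) \<noteq> 0\<close> have "card F' \<in> K" unfolding K_def by blast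
    then show False using that(2) F(3) by (metis Least_le not_less)
  qed
  then have "\<forall>F' d'. F' \<subseteq> B \<longrightarrow> card F' < card F \<longrightarrow> (\<Sum>b\<in>F'. t (d' b) b) \<in> S \<longrightarrow>
      (\<Sum>b\<in>F'. t (d' b) b) = 0"
    by blast
  then show ?thesis by (rule that[OF F(1,2,4,5)])
qed

lemma submodule_containing_vac_tensor:
  assumes S: "W.subspace S" and S_closed: "\<And>a w n. w \<in> S \<Longrightarrow> YW a w n \<in> S"
    and y: "t vacU y \<in> S" "y \<noteq> 0"
  shows "S = UNIV"
proof -
  let ?N = "{v. t vacU v \<in> S}"
  have N: "V.subspace ?N"
    unfolding V.subspace_def
    using W.subspace_0[OF S] W.subspace_add[OF S] W.subspace_scale[OF S]
    by (simp add: T.add_right T.scale_right)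
  have hom_closed: "YV v w n \<in> ?N" if "w \<in> ?N" and "v \<in> homogeneous" for v w n
  proof -
    obtain g where g: "g \<in> carrier G" "v \<in> Vg g" using \<open>v \<in> homogeneous\<close> unfolding homogeneous_def by blast
    have "YW (t vacU v) (t vacU w) n = t vacU (YV v w n)"
      using YW_vacU_tensor[OF g] act_vac[OF g(1)] by simp
    then show ?thesis using S_closed that(1) by (metis mem_Collect_eq)
  qed
  have "YV v w n \<in> ?N" if "w \<in> ?N" for v w n
  proof -
    obtain F and c :: "'g \<Rightarrow> 'v"
      where F: "finite F" "\<forall>g\<in>F. c g \<in> homogeneous" "v = (\<Sum>g\<in>F. c g)"
      by (rule homogeneous_decomposition[where v = v])
    have "YV v w n = (\<Sum>g\<in>F. YV (c g) w n)" using F(3) by (simp add: linear_map_sum[OF V.linear_Y_left])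
    also have "\<dots> \<in> ?N" using F(2) hom_closed that by (intro V.subspace_sum[OF N]) blast
    finally show ?thesis .
  qed
  moreover have "?N \<noteq> {0}" using y by auto
  ultimately have "?N = UNIV" using V_irreducible[OF N] by blast
  then have "t vacU v \<in> S" for v by blast
  then have "t u v \<in> S" for u v
    using S_closed[of "t vacU v" "t u vacV" "-1"] by (simp add: YW_tensor_vacV YU_vac_creation)
  then have "W.span {t u v | u v. True} \<subseteq> S"
    by (intro W.span_minimal) (auto simp: S)
  then show ?thesis using T.span_tensors by auto
qed

lemma YW_irreducible:
  assumes S: "W.subspace S" and S_closed: "\<forall>a w n. w \<in> S \<longrightarrow> YW a w n \<in> S"
  shows "S = {0} \<or> S = UNIV"
proof (cases "S = {0}")
  case False
  then obtain s where s: "s \<in> S" "s \<noteq> 0" using W.subspace_0[OF S] by blast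
  obtain B where B: "V.independent B" "V.span B = UNIV"
    using V.maximal_independent_subset[of UNIV] by (metis top.extremum_uniqueI)
  obtain F d where F: "finite F" "F \<subseteq> B" "(\<Sum>b\<in>F. t (d b) b) \<in> S" "(\<Sum>b\<in>F. t (d b) b) \<noteq> 0"
    and minimal: "\<forall>F' d'. F' \<subseteq> B \<longrightarrow> card F' < card F \<longrightarrow> (\<Sum>b\<in>F'. t (d' b) b) \<in> S \<longrightarrow>
      (\<Sum>b\<in>F'. t (d' b) b) = 0"
    by (rule submodule_minimal_expansion[OF B(2) s])
  obtain b0 where b0: "b0 \<in> F" "d b0 \<noteq> 0"
  proof -
    have "\<not> (\<forall>b\<in>F. d b = 0)"
    proof
      assume "\<forall>b\<in>F. d b = 0"
      then have "(\<Sum>b\<in>F. t (d b) b) = 0" by simp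
      with F(4) show False ..
    qed
    then show ?thesis using that by blast
  qed
  obtain y where "t vacU y \<in> S" "y \<noteq> 0"
    using vac_tensor_in_submodule[OF S S_closed[rule_format] B(1) F(1-3) b0 minimal[rule_format]] by blast
  then have "S = UNIV" using S_closed by (intro submodule_containing_vac_tensor[OF S]) auto
  then show ?thesis ..
qed simp

end

theorem corollary2p17:
  fixes G :: "('g, 'b) monoid_scheme"
    and sU :: "complex \<Rightarrow> 'u::ab_group_add \<Rightarrow> 'u" and YU :: "'u \<Rightarrow> 'u \<Rightarrow> int \<Rightarrow> 'u" and vacU :: 'u
    and act :: "'g \<Rightarrow> 'u \<Rightarrow> 'u"
    and sV :: "complex \<Rightarrow> 'v::ab_group_add \<Rightarrow> 'v" and YV :: "'v \<Rightarrow> 'v \<Rightarrow> int \<Rightarrow> 'v" and vacV :: 'v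
    and Vg :: "'g \<Rightarrow> 'v set"
    and sW :: "complex \<Rightarrow> 'w::ab_group_add \<Rightarrow> 'w" and t :: "'u \<Rightarrow> 'v \<Rightarrow> 'w"
    and YW :: "'w \<Rightarrow> 'w \<Rightarrow> int \<Rightarrow> 'w"
  assumes "group G"
    and "nva sU YU vacU"
    and "nva_group_action G sU YU vacU act"
    and "nva_G_graded G sV YV vacV Vg"
    and "nva_irreducible sU YU vacU"
    and "nva_irreducible sV YV vacV"
    and "countable_dim sU"
    and "is_tensor_product sU sV sW t"
    and "is_smash_Y G act YU YV Vg sW t YW"
  shows "nva_irreducible sW YW (t vacU vacV)"
proof -
  interpret irreducible_smash_product G sU YU vacU act sV YV vacV Vg sW t YW
    using assms by (simp add: irreducible_smash_product_def smash_product_def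
        irreducible_smash_product_axioms_def)
  show ?thesis
    unfolding nva_irreducible_def using nva_W YW_irreducible by blast
qed

end
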